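(* Let $n\ge 1$, let $U$ be a unitary on $n$ qubits (the compute qubits), let $\rho$ be an arbitrary $n$-qubit density matrix, and let $\mathcal{E}(\sigma)=\sum_i E_i\sigma E_i^\dagger$ be an arbitrary noise map acting on the compute qubits only. Then there exist $m\ge 1$ and checks $\tilde C_{1,k},\tilde C_{2,k}$ ($k=1,\dots,m$), i.e. $n$-qubit unitaries satisfying $\tilde C_{2,k}\,U\,\tilde C_{1,k}=U$ for every $k$, such that, whenever the probability of obtaining outcome $0$ on all $m$ ancillas in the $m$-layer Pauli check sandwiching protocol (with noise $\mathcal{E}$ acting immediately after $U$) is nonzero, the postselected state $\rho_m$ of the compute qubits satisfies $F(\rho_m,U\rho U^\dagger)=1$.
   Context: The $m$-layer Pauli check sandwiching protocol: for each $k$, let $C_{j,k}=\tilde C_{j,k}\otimes|1\rangle\langle 1|_k+\mathbb{I}\otimes|0\rangle\langle 0|_k$ ($j=1,2$) be the controlled unitary with control on ancilla $k$ and target the compute qubits. Start with the compute qubits in $\rho$ and $m$ ancillas in $|0\rangle$; apply a Hadamard to every ancilla; apply $C_{1,m},\dots,C_{1,1}$ (in this order); apply $U$ to the compute qubits; apply the noise map $\mathcal{E}$ to the compute qubits; apply $C_{2,1},\dots,C_{2,m}$ (in this order); apply a Hadamard to every ancilla; measure all ancillas in the computational basis and keep only the runs in which every ancilla gives outcome $0$. The postselected state $\rho_m$ is the (renormalized) resulting state of the compute qubits. Fidelity is $F(\rho,\omega)=\left(\operatorname{tr}\sqrt{\sqrt{\rho}\,\omega\sqrt{\rho}}\right)^2$.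 *)

theory Defs
  imports "Jordan_Normal_Form.Schur_Decomposition"
begin

abbreviation dag :: "complex mat \<Rightarrow> complex mat" where
  "dag A \<equiv> mat_adjoint A"

definition mtrace :: "complex mat \<Rightarrow> complex" where
  "mtrace A = (\<Sum>i<dim_row A. A $$ (i, i))"

definition unitary_mat :: "nat \<Rightarrow> complex mat \<Rightarrow> bool" where
  "unitary_mat d U \<longleftrightarrow> U \<in> carrier_mat d d \<and> dag U * U = 1\<^sub>m d \<and> U * dag U = 1\<^sub>m d"

definition psd_mat :: "nat \<Rightarrow> complex mat \<Rightarrow> bool" where
  "psd_mat d A \<longleftrightarrow> A \<in> carrier_mat d d \<and> dag A = A \<and>
     (\<forall>v \<in> carrier_vec d. 0 \<le> Re ((A *\<^sub>v v) \<bullet>c v))"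

definition density_mat :: "nat \<Rightarrow> complex mat \<Rightarrow> bool" where
  "density_mat d \<rho> \<longleftrightarrow> psd_mat d \<rho> \<and> mtrace \<rho> = 1"

definition msqrt :: "complex mat \<Rightarrow> complex mat" where
  "msqrt A = (THE B. psd_mat (dim_row A) B \<and> B * B = A)"

definition fidelity :: "complex mat \<Rightarrow> complex mat \<Rightarrow> real" where
  "fidelity \<rho> \<omega> = (Re (mtrace (msqrt (msqrt \<rho> * \<omega> * msqrt \<rho>)))) ^ 2"

text \<open>A joint state of the m ancillas and the compute qubits (dimension d = 2^n) is
represented in block form: an ancilla bit string is a function x :: nat \<Rightarrow> bool
(ancilla k is bit x k, k = 1..m), and the joint operator is
Sum over x,y of |x><y| (ancilla part) tensor B x y (compute part). Every operator on
ancillas tensor compute qubits has this form; the operations below are exactly the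
actions of the protocol's operators on this representation.\<close>

type_synonym block = "(nat \<Rightarrow> bool) \<Rightarrow> (nat \<Rightarrow> bool) \<Rightarrow> complex mat"

(* compute qubits in rho, all ancillas in |0> *)
definition pcs_init :: "nat \<Rightarrow> complex mat \<Rightarrow> block" where
  "pcs_init d \<rho> = (\<lambda>x y. if x = (\<lambda>_. False) \<and> y = (\<lambda>_. False) then \<rho> else 0\<^sub>m d d)"

definition hadamard_entry :: "bool \<Rightarrow> bool \<Rightarrow> complex" where
  "hadamard_entry a b = (if a \<and> b then -1 else 1) / complex_of_real (sqrt 2)"

(* conjugation of the joint state by a Hadamard on ancilla k *)
definition pcs_hadamard :: "nat \<Rightarrow> block \<Rightarrow> block" where
  "pcs_hadamard k B = (\<lambda>x y.
      (hadamard_entry (x k) False * hadamard_entry (y k) False) \<cdot>\<^sub>m B (x(k := False)) (y(k := False))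
    + (hadamard_entry (x k) False * hadamard_entry (y k) True) \<cdot>\<^sub>m B (x(k := False)) (y(k := True))
    + (hadamard_entry (x k) True * hadamard_entry (y k) False) \<cdot>\<^sub>m B (x(k := True)) (y(k := False))
    + (hadamard_entry (x k) True * hadamard_entry (y k) True) \<cdot>\<^sub>m B (x(k := True)) (y(k := True)))"

(* conjugation by the controlled unitary C tensor |1><1|_k + I tensor |0><0|_k *)
definition pcs_controlled :: "nat \<Rightarrow> nat \<Rightarrow> complex mat \<Rightarrow> block \<Rightarrow> block" where
  "pcs_controlled d k C B = (\<lambda>x y.
      (if x k then C else 1\<^sub>m d) * B x y * (if y k then dag C else 1\<^sub>m d))"

definition pcs_unitary :: "complex mat \<Rightarrow> block \<Rightarrow> block" where
  "pcs_unitary U B = (\<lambda>x y. U * B x y * dag U)"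

definition kraus_apply :: "nat \<Rightarrow> complex mat list \<Rightarrow> complex mat \<Rightarrow> complex mat" where
  "kraus_apply d Es \<sigma> = foldr (\<lambda>E acc. E * \<sigma> * dag E + acc) Es (0\<^sub>m d d)"

definition pcs_noise :: "nat \<Rightarrow> complex mat list \<Rightarrow> block \<Rightarrow> block" where
  "pcs_noise d Es B = (\<lambda>x y. kraus_apply d Es (B x y))"

definition pcs_hadamard_all :: "nat \<Rightarrow> block \<Rightarrow> block" where
  "pcs_hadamard_all m B = fold pcs_hadamard [1..<Suc m] B"

(* the full circuit, before measurement; fold applies list elements in order, so
   C_{1,m}, ..., C_{1,1} and then C_{2,1}, ..., C_{2,m} *)
definition pcs_circuit :: "nat \<Rightarrow> nat \<Rightarrow> (nat \<Rightarrow> complex mat) \<Rightarrow> (nat \<Rightarrow> complex mat)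
    \<Rightarrow> complex mat \<Rightarrow> complex mat list \<Rightarrow> complex mat \<Rightarrow> block" where
  "pcs_circuit d m C1 C2 U Es \<rho> =
     pcs_hadamard_all m
      (fold (\<lambda>k. pcs_controlled d k (C2 k)) [1..<Suc m]
        (pcs_noise d Es
          (pcs_unitary U
            (fold (\<lambda>k. pcs_controlled d k (C1 k)) (rev [1..<Suc m])
              (pcs_hadamard_all m (pcs_init d \<rho>))))))"

(* unnormalised compute state after projecting every ancilla onto |0> *)
definition pcs_postselected_unnorm :: "nat \<Rightarrow> nat \<Rightarrow> (nat \<Rightarrow> complex mat) \<Rightarrow> (nat \<Rightarrow> complex mat)
    \<Rightarrow> complex mat \<Rightarrow> complex mat list \<Rightarrow> complex mat \<Rightarrow> complex mat" where
  "pcs_postselected_unnorm d m C1 C2 U Es \<rho> =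
     pcs_circuit d m C1 C2 U Es \<rho> (\<lambda>_. False) (\<lambda>_. False)"

definition pcs_success_prob :: "nat \<Rightarrow> nat \<Rightarrow> (nat \<Rightarrow> complex mat) \<Rightarrow> (nat \<Rightarrow> complex mat)
    \<Rightarrow> complex mat \<Rightarrow> complex mat list \<Rightarrow> complex mat \<Rightarrow> real" where
  "pcs_success_prob d m C1 C2 U Es \<rho> = Re (mtrace (pcs_postselected_unnorm d m C1 C2 U Es \<rho>))"

definition pcs_postselected :: "nat \<Rightarrow> nat \<Rightarrow> (nat \<Rightarrow> complex mat) \<Rightarrow> (nat \<Rightarrow> complex mat)
    \<Rightarrow> complex mat \<Rightarrow> complex mat list \<Rightarrow> complex mat \<Rightarrow> complex mat" where
  "pcs_postselected d m C1 C2 U Es \<rho> =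
     complex_of_real (1 / pcs_success_prob d m C1 C2 U Es \<rho>) \<cdot>\<^sub>m pcs_postselected_unnorm d m C1 C2 U Es \<rho>"

end

(* Take as checks C_{1,k} = V_k and C_{2,k} = U V_k^dag U^dag, where V_1, ..., V_d (d = 2^n)
   flip the sign of one computational basis vector each and V_{d+1}, ..., V_{d+n} shift the
   basis cyclically by 2^0, ..., 2^(n-1); then C_{2,k} U C_{1,k} = U. Expanding the Hadamard
   layers, the unnormalised postselected state is 4^(-m) sum_i K_i rho K_i^dag with
   K_i = sum_x W_{2,x} E_i U W_{1,x}, where x runs over the 2^m subsets of checks and W_{j,x}
   is the product of the selected C_{j,k}. The relation C_{2,k} U C_{1,k} = U turns K_i into
   U T(U^dag E_i U) for the twirl T(A) = sum_x W_x^dag A W_x: the sign flips remove the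
   off-diagonal entries of A and the cyclic shifts average its diagonal, so
   T(A) = 2^d tr(A) I. Hence the postselected state is U rho U^dag itself, which has
   fidelity 1 with itself; this last step needs the uniqueness of positive semidefinite
   square roots, which rests on the spectral theorem for Hermitian matrices. *)

theory Submission
  imports Defs "HOL-Number_Theory.Cong"
begin

section \<open>Adjoints, traces and unitary matrices\<close>

lemma dag_carrier_mat [simp]: "dag A \<in> carrier_mat (dim_col A) (dim_row A)"
  unfolding mat_adjoint_def by (auto simp: mat_of_rows_def)

lemma dag_dim [simp]: "dim_row (dag A) = dim_col A" "dim_col (dag A) = dim_row A"
  unfolding mat_adjoint_def by (auto simp: mat_of_rows_def)

lemma index_dag [simp]: "i < dim_col A \<Longrightarrow> j < dim_row A \<Longrightarrow> dag A $$ (i, j) = cnj (A $$ (j, i))"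
  unfolding mat_adjoint_def by (auto simp: mat_of_rows_def)

lemma dag_carrier_matI [simp]: "A \<in> carrier_mat n m \<Longrightarrow> dag A \<in> carrier_mat m n"
  by (metis carrier_matD dag_carrier_mat)

lemma dag_dag [simp]: "dag (dag A) = A"
  by (rule eq_matI) auto

lemma dag_mult:
  assumes "A \<in> carrier_mat n k" "B \<in> carrier_mat k m"
  shows "dag (A * B) = dag B * dag A"
  using assms by (intro eq_matI) (auto simp: scalar_prod_def intro!: sum.cong)

lemma dag_one [simp]: "dag (1\<^sub>m n) = 1\<^sub>m n"
  by (rule eq_matI) auto

lemma dag_zero [simp]: "dag (0\<^sub>m n m) = 0\<^sub>m m n"
  by (rule eq_matI) auto

lemma dag_smult: "dag (c \<cdot>\<^sub>m A) = cnj c \<cdot>\<^sub>m dag A"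
  by (rule eq_matI) auto

lemma smult_smult_mat: "a \<cdot>\<^sub>m (b \<cdot>\<^sub>m A) = (a * b :: complex) \<cdot>\<^sub>m A"
  by (rule eq_matI) auto

lemma index_mat_diag [simp]: "i < n \<Longrightarrow> j < n \<Longrightarrow> mat_diag n f $$ (i, j) = (if i = j then f i else 0)"
  and dim_mat_diag [simp]: "dim_row (mat_diag n f) = n" "dim_col (mat_diag n f) = n"
  unfolding mat_diag_def by auto

lemma mat_diag_mult_vec:
  assumes "v \<in> carrier_vec n"
  shows "mat_diag n f *\<^sub>v v = vec n (\<lambda>i. f i * v $ i)"
proof (rule eq_vecI, insert assms, auto simp: mat_diag_def scalar_prod_def, goal_cases)
  case (1 i)
  then show ?case by (subst sum.remove[of _ i]) auto
qed

lemma dag_mat_diag: "dag (mat_diag n f) = mat_diag n (\<lambda>i. cnj (f i))"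
  by (rule eq_matI) auto

lemma index_mult_mat_sum:
  assumes "A \<in> carrier_mat n k" "B \<in> carrier_mat k m" "i < n" "j < m"
  shows "(A * B) $$ (i, j) = (\<Sum>l<k. A $$ (i, l) * B $$ (l, j))"
  using assms by (auto simp: scalar_prod_def atLeast0LessThan intro!: sum.cong)

lemma index_mult_mat_vec_sum:
  assumes "M \<in> carrier_mat n n" "v \<in> carrier_vec n" "i < n"
  shows "(M *\<^sub>v v) $ i = (\<Sum>j<n. M $$ (i, j) * v $ j)"
  using assms by (auto simp: scalar_prod_def atLeast0LessThan intro!: sum.cong)

lemma cscalar_prod_sum:
  assumes "v \<in> carrier_vec n" "w \<in> carrier_vec n"
  shows "v \<bullet>c w = (\<Sum>i<n. v $ i * cnj (w $ i))"
  using assms by (auto simp: scalar_prod_def atLeast0LessThan intro!: sum.cong)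

lemma mult_mat_vec_cscalar_prod_dag:
  assumes M: "M \<in> carrier_mat n n" and v: "v \<in> carrier_vec n" and w: "w \<in> carrier_vec n"
  shows "(M *\<^sub>v v) \<bullet>c w = v \<bullet>c (dag M *\<^sub>v w)"
proof -
  have "(M *\<^sub>v v) \<bullet>c w = (\<Sum>i<n. (\<Sum>j<n. M $$ (i, j) * v $ j) * cnj (w $ i))"
    using assms by (simp add: cscalar_prod_sum[of _ n] index_mult_mat_vec_sum[of M n]
        del: index_mult_mat_vec)
  also have "\<dots> = (\<Sum>j<n. v $ j * cnj (\<Sum>i<n. cnj (M $$ (i, j)) * w $ i))"
    by (simp add: sum_distrib_left sum_distrib_right algebra_simps) (rule sum.swap)
  also have "\<dots> = (\<Sum>j<n. v $ j * cnj ((dag M *\<^sub>v w) $ j))"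
    using assms by (intro sum.cong refl) (simp add: index_mult_mat_vec_sum[of "dag M" n] del: index_mult_mat_vec)
  also have "\<dots> = v \<bullet>c (dag M *\<^sub>v w)"
    by (rule cscalar_prod_sum[symmetric]) (use assms mult_mat_vec_carrier[of "dag M" n n w] in auto)
  finally show ?thesis .
qed

lemma mtrace_mult_comm:
  assumes A: "A \<in> carrier_mat n n" and B: "B \<in> carrier_mat n n"
  shows "mtrace (A * B) = mtrace (B * A)"
proof -
  have "mtrace (A * B) = (\<Sum>i<n. \<Sum>k<n. A $$ (i, k) * B $$ (k, i))"
    unfolding mtrace_def using A B by (intro sum.cong) (auto simp del: index_mult_mat(1) intro: index_mult_mat_sum[OF A B])
  also have "\<dots> = (\<Sum>k<n. \<Sum>i<n. B $$ (k, i) * A $$ (i, k))"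
    by (subst sum.swap) (simp add: mult.commute)
  also have "\<dots> = mtrace (B * A)"
    unfolding mtrace_def using A B by (intro sum.cong) (auto simp del: index_mult_mat(1) intro: index_mult_mat_sum[OF B A, symmetric])
  finally show ?thesis .
qed

lemma mtrace_smult: "A \<in> carrier_mat n n \<Longrightarrow> mtrace (c \<cdot>\<^sub>m A) = c * mtrace A"
  unfolding mtrace_def by (auto simp: sum_distrib_left intro!: sum.cong)

lemma unitary_matI:
  assumes "V \<in> carrier_mat n n" "dag V * V = 1\<^sub>m n"
  shows "unitary_mat n V"
  using assms mat_mult_left_right_inverse[of "dag V" n V] unfolding unitary_mat_def by auto

lemma unitary_mat_carrier: "unitary_mat n V \<Longrightarrow> V \<in> carrier_mat n n"
  unfolding unitary_mat_def by auto

lemma unitary_mat_dag: "unitary_mat n V \<Longrightarrow> unitary_mat n (dag V)"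
  unfolding unitary_mat_def by auto

lemma unitary_mat_mult:
  assumes A: "unitary_mat n A" and B: "unitary_mat n B"
  shows "unitary_mat n (A * B)"
proof (rule unitary_matI)
  have c: "A \<in> carrier_mat n n" "B \<in> carrier_mat n n" "dag A \<in> carrier_mat n n" "dag B \<in> carrier_mat n n"
    using A B unitary_mat_carrier by auto
  then show "A * B \<in> carrier_mat n n" by auto
  have "dag (A * B) * (A * B) = dag B * ((dag A * A) * B)"
    using c by (simp add: dag_mult[of _ n n] assoc_mult_mat[of _ n n _ n _ n])
  then show "dag (A * B) * (A * B) = 1\<^sub>m n"
    using A B c unfolding unitary_mat_def by simp
qed

section \<open>Spectral theorem for Hermitian matrices\<close>

lemma exists_eigenvector:
  fixes A :: "complex mat"
  assumes A: "A \<in> carrier_mat n n" and n: "n > 0"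
  shows "\<exists>e v. v \<in> carrier_vec n \<and> v \<noteq> 0\<^sub>v n \<and> A *\<^sub>v v = e \<cdot>\<^sub>v v"
proof -
  obtain es where cp: "char_poly A = (\<Prod>e\<leftarrow>es. [:- e, 1:])" and len: "length es = n"
    using char_poly_factorized[OF A] by blast
  then obtain e es' where es: "es = e # es'" using n by (cases es) auto
  have "eigenvalue A e"
    unfolding eigenvalue_root_char_poly[OF A] cp es by simp
  then have "eigenvector A (find_eigenvector A e) e"
    using find_eigenvector[OF A] by simp
  then show ?thesis unfolding eigenvector_def using A by auto
qed

lemma exists_normalizing_scalar:
  assumes v: "v \<in> carrier_vec n" and v0: "v \<noteq> 0\<^sub>v n"
  shows "\<exists>g. (\<Sum>i<n. (g * v $ i) * cnj (g * v $ i)) = 1 \<and> cnj (g * v $ 0) = g * v $ 0"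
proof -
  define S where "S = (\<Sum>i<n. (cmod (v $ i))\<^sup>2)"
  obtain k where k: "k < n" "v $ k \<noteq> 0"
    using v v0 by (metis eq_vecI carrier_vecD index_zero_vec)
  have S: "S > 0" unfolding S_def by (rule sum_pos2[of _ k]) (use k in auto)
  define ph where "ph = (if v $ 0 = 0 then 1 else cnj (v $ 0) / complex_of_real (cmod (v $ 0)))"
  have ph: "cmod ph = 1" unfolding ph_def by (simp add: norm_divide)
  have ph_v0: "ph * v $ 0 = complex_of_real (cmod (v $ 0))"
    unfolding ph_def
    by (auto simp: complex_norm_square[symmetric] field_simps power2_eq_square mult.commute)
  define g where "g = ph / complex_of_real (sqrt S)"
  have sq: "(g * v $ i) * cnj (g * v $ i) = complex_of_real ((cmod (v $ i))\<^sup>2 / S)" for i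
  proof -
    have "cmod (g * v $ i) = cmod (v $ i) / sqrt S"
      unfolding g_def using S ph by (simp add: norm_mult norm_divide)
    then have "(cmod (g * v $ i))\<^sup>2 = (cmod (v $ i))\<^sup>2 / S"
      using S by (simp add: power_divide)
    then show ?thesis by (metis complex_norm_square)
  qed
  have "(\<Sum>i<n. (g * v $ i) * cnj (g * v $ i)) = complex_of_real (\<Sum>i<n. (cmod (v $ i))\<^sup>2 / S)"
    by (simp only: sq of_real_sum)
  also have "\<dots> = 1"
    using S by (simp add: sum_divide_distrib[symmetric] S_def[symmetric])
  finally have unit: "(\<Sum>i<n. (g * v $ i) * cnj (g * v $ i)) = 1" .
  have "g * v $ 0 = complex_of_real (cmod (v $ 0) / sqrt S)"
    unfolding g_def using ph_v0 by (simp add: field_simps)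
  then have "cnj (g * v $ 0) = g * v $ 0"
    by (metis complex_cnj_complex_of_real)
  with unit show ?thesis by blast
qed

(* The real first entry is what the Householder reflection of householder_mat_first_col needs. *)
lemma exists_unit_eigenvector:
  fixes A :: "complex mat"
  assumes A: "A \<in> carrier_mat n n" and n: "n > 0"
  shows "\<exists>e y. y \<in> carrier_vec n \<and> (\<Sum>i<n. y $ i * cnj (y $ i)) = 1 \<and> cnj (y $ 0) = y $ 0
     \<and> A *\<^sub>v y = e \<cdot>\<^sub>v y"
proof -
  obtain e v where v: "v \<in> carrier_vec n" "v \<noteq> 0\<^sub>v n" and ev: "A *\<^sub>v v = e \<cdot>\<^sub>v v"
    using exists_eigenvector[OF A n] by blast
  obtain g where g: "(\<Sum>i<n. (g * v $ i) * cnj (g * v $ i)) = 1" "cnj (g * v $ 0) = g * v $ 0"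
    using exists_normalizing_scalar[OF v] by blast
  have "A *\<^sub>v (g \<cdot>\<^sub>v v) = e \<cdot>\<^sub>v (g \<cdot>\<^sub>v v)"
    using A v ev by (simp add: mult_mat_vec smult_smult_assoc mult.commute)
  then show ?thesis using v g n by (intro exI[of _ e] exI[of _ "g \<cdot>\<^sub>v v"]) auto
qed

(* For u = 0 the division by zero makes this the identity matrix. *)
definition householder_mat :: "nat \<Rightarrow> (nat \<Rightarrow> complex) \<Rightarrow> complex mat" where
  "householder_mat n u = mat n n (\<lambda>(i, j).
     (if i = j then 1 else 0) - 2 / (\<Sum>l<n. u l * cnj (u l)) * u i * cnj (u j))"

lemma householder_mat_unitary: "unitary_mat n (householder_mat n u)"
proof -
  define N where "N = (\<Sum>l<n. u l * cnj (u l))"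
  define c where "c = 2 / N"
  define W where "W = householder_mat n u"
  have W: "W \<in> carrier_mat n n" unfolding W_def householder_mat_def by auto
  have W_index: "W $$ (i, j) = (if i = j then 1 else 0) - c * u i * cnj (u j)" if "i < n" "j < n" for i j
    using that unfolding W_def householder_mat_def c_def N_def by simp
  have cN: "c * c * N = 2 * c" unfolding c_def by (cases "N = 0") auto
  have "cnj N = N" unfolding N_def by (simp add: mult.commute)
  then have cc: "cnj c = c" unfolding c_def by simp
  have "dag W = W"
    by (rule eq_matI) (use W in \<open>auto simp: W_index cc\<close>)
  moreover have "W * W = 1\<^sub>m n"
  proof (rule eq_matI)
    fix i j assume "i < dim_row (1\<^sub>m n)" and "j < dim_col (1\<^sub>m n)"
    then have i: "i < n" and j: "j < n" by auto
    have "(W * W) $$ (i, j) = (\<Sum>l<n. W $$ (i, l) * W $$ (l, j))"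
      by (rule index_mult_mat_sum[OF W W i j])
    also have "\<dots> = (\<Sum>l<n. (if l = i then (if l = j then 1 else 0) - c * u i * cnj (u j) else 0)
         - (if l = j then c * u i * cnj (u l) else 0) + (c * c * u i * cnj (u j)) * (u l * cnj (u l)))"
      using i j by (intro sum.cong refl) (auto simp: W_index algebra_simps)
    also have "\<dots> = (if i = j then 1 else 0) - c * u i * cnj (u j) - c * u i * cnj (u j)
        + (c * c * u i * cnj (u j)) * N"
      using i j unfolding N_def
      by (simp add: sum.distrib sum_subtractf sum_distrib_left[symmetric])
    also have "(c * c * u i * cnj (u j)) * N = (c * c * N) * (u i * cnj (u j))"
      by (simp add: algebra_simps)
    also have "(if i = j then 1 else 0) - c * u i * cnj (u j) - c * u i * cnj (u j)
        + (c * c * N) * (u i * cnj (u j)) = 1\<^sub>m n $$ (i, j)"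
      using i j unfolding cN by (simp add: algebra_simps)
    finally show "(W * W) $$ (i, j) = 1\<^sub>m n $$ (i, j)" .
  qed (use W in auto)
  ultimately show ?thesis
    unfolding W_def[symmetric] using W by (intro unitary_matI) auto
qed

lemma householder_mat_first_col:
  assumes n: "n > 0" and unit: "(\<Sum>l<n. y $ l * cnj (y $ l)) = 1" and y0: "cnj (y $ 0) = y $ 0"
    and i: "i < n"
  shows "householder_mat n (\<lambda>l. (if l = 0 then 1 else 0) - y $ l) $$ (i, 0) = y $ i"
proof -
  define u where "u = (\<lambda>l. (if l = 0 then 1 else 0) - y $ l)"
  define N where "N = (\<Sum>l<n. u l * cnj (u l))"
  have N: "N = 2 - 2 * y $ 0"
  proof -
    have "N = (\<Sum>l<n. (if l = 0 then 1 - y $ l - cnj (y $ l) else 0) + y $ l * cnj (y $ l))"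
      unfolding N_def u_def by (intro sum.cong refl) (auto simp: algebra_simps)
    also have "\<dots> = 2 - 2 * y $ 0" using n unit y0 by (simp add: sum.distrib)
    finally show ?thesis .
  qed
  have entry: "householder_mat n u $$ (i, 0) = (if i = 0 then 1 else 0) - 2 / N * u i * cnj (u 0)"
    using i n unfolding householder_mat_def N_def by simp
  show ?thesis
  proof (cases "y $ 0 = 1")
    case True
    have "(\<Sum>l<n. (cmod (u l))\<^sup>2) = Re N"
      unfolding N_def by (simp add: complex_norm_square[symmetric] del: of_real_power)
    then have "(\<Sum>l<n. (cmod (u l))\<^sup>2) = 0"
      using N True by simp
    then have "u i = 0" using i by (subst (asm) sum_nonneg_eq_0_iff) auto
    then show ?thesis using i True unfolding u_def[symmetric] entry by (auto simp: u_def split: if_splits)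
  next
    case False
    then have "2 / N * cnj (u 0) = 1" unfolding N u_def using y0 by (simp add: field_simps)
    moreover have "2 / N * u i * cnj (u 0) = u i * (2 / N * cnj (u 0))" by (simp add: algebra_simps)
    ultimately show ?thesis unfolding u_def[symmetric] entry by (simp add: u_def)
  qed
qed

lemma exists_unitary_eigenvector_first_col:
  fixes A :: "complex mat"
  assumes A: "A \<in> carrier_mat n n" and n: "n > 0"
  shows "\<exists>W e. unitary_mat n W \<and> col (dag W * A * W) 0 = e \<cdot>\<^sub>v unit_vec n 0"
proof -
  obtain e y where y: "y \<in> carrier_vec n" and unit: "(\<Sum>i<n. y $ i * cnj (y $ i)) = 1"
    and y0: "cnj (y $ 0) = y $ 0" and ev: "A *\<^sub>v y = e \<cdot>\<^sub>v y"
    using exists_unit_eigenvector[OF A n] by blast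
  define W where "W = householder_mat n (\<lambda>l. (if l = 0 then 1 else 0) - y $ l)"
  have W: "unitary_mat n W" unfolding W_def by (rule householder_mat_unitary)
  have Wc: "W \<in> carrier_mat n n" "dag W \<in> carrier_mat n n" using W unitary_mat_carrier by auto
  have W_col: "col W 0 = y"
    unfolding W_def using householder_mat_first_col[OF n unit y0] y Wc n
    by (intro eq_vecI) (auto simp: W_def)
  have "col (dag W * A * W) 0 = (dag W * A) *\<^sub>v col W 0"
    by (rule col_mult2) (use Wc A n in auto)
  also have "\<dots> = dag W *\<^sub>v (A *\<^sub>v col W 0)"
    unfolding W_col by (rule assoc_mult_mat_vec[of _ n n _ n]) (use Wc A y in auto)
  also have "\<dots> = e \<cdot>\<^sub>v (dag W *\<^sub>v col W 0)"
    unfolding W_col ev by (rule mult_mat_vec[of _ n n]) (use Wc y in auto)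
  also have "\<dots> = e \<cdot>\<^sub>v col (dag W * W) 0"
    by (subst col_mult2[of _ n n _ n]) (use Wc n in auto)
  also have "\<dots> = e \<cdot>\<^sub>v unit_vec n 0"
    using W n unfolding unitary_mat_def by simp
  finally show ?thesis using W by blast
qed

lemma hermitian_deflation:
  assumes A: "A \<in> carrier_mat (Suc k) (Suc k)" and herm: "dag A = A"
  shows "\<exists>W e B. unitary_mat (Suc k) W \<and> B \<in> carrier_mat k k \<and> dag B = B \<and>
    A = W * four_block_mat (mat_diag 1 (\<lambda>_. complex_of_real e)) (0\<^sub>m 1 k) (0\<^sub>m k 1) B * dag W"
proof -
  define n where "n = Suc k"
  have A: "A \<in> carrier_mat n n" using A unfolding n_def .
  obtain W e where W: "unitary_mat n W" and col0_vec: "col (dag W * A * W) 0 = e \<cdot>\<^sub>v unit_vec n 0"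
    using exists_unitary_eigenvector_first_col[OF A] unfolding n_def by blast
  have Wc: "W \<in> carrier_mat n n" "dag W \<in> carrier_mat n n" using W unitary_mat_carrier by auto
  define A' where "A' = dag W * A * W"
  have A'c: "A' \<in> carrier_mat n n" unfolding A'_def using Wc A by auto
  have "dag A' = A'" unfolding A'_def using Wc A herm
    by (simp add: dag_mult[of _ n n _ n] assoc_mult_mat[of _ n n _ n _ n])
  then have A'_herm: "A' $$ (j, i) = cnj (A' $$ (i, j))" if "i < n" "j < n" for i j
    by (metis A'c carrier_matD index_dag that)
  have col0: "A' $$ (i, 0) = (if i = 0 then e else 0)" if "i < n" for i
  proof -
    have "col A' 0 $ i = (e \<cdot>\<^sub>v unit_vec n 0) $ i" unfolding A'_def by (simp only: col0_vec)
    then show ?thesis using that A'c n_def by auto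
  qed
  have e: "cnj e = e" using A'_herm[of 0 0] col0[of 0] n_def by simp
  define B where "B = mat k k (\<lambda>(i, j). A' $$ (Suc i, Suc j))"
  have Bc: "B \<in> carrier_mat k k" unfolding B_def by simp
  have "dag B = B"
  proof (rule eq_matI)
    fix i j assume "i < dim_row B" "j < dim_col B"
    then show "dag B $$ (i, j) = B $$ (i, j)"
      using A'_herm[of "Suc j" "Suc i"] Bc n_def by (simp add: B_def)
  qed (use Bc in auto)
  let ?D = "four_block_mat (mat_diag 1 (\<lambda>_. complex_of_real (Re e))) (0\<^sub>m 1 k) (0\<^sub>m k 1) B"
  have "A' = ?D"
  proof (rule eq_matI)
    fix i j assume "i < dim_row ?D" and "j < dim_col ?D"
    then have i: "i < n" and j: "j < n" using Bc n_def by auto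
    have "A' $$ (0, j) = (if j = 0 then e else 0)" using A'_herm[OF j, of 0] col0[OF j] n_def by auto
    then show "A' $$ (i, j) = ?D $$ (i, j)"
      using i j col0 e Bc n_def by (auto simp: B_def complex_eq_iff)
  qed (use A'c Bc n_def in auto)
  moreover have "W * A' * dag W = (W * dag W) * A * (W * dag W)"
    unfolding A'_def using Wc A
    by (simp add: assoc_mult_mat[of _ n n _ n _ n] mult_carrier_mat[of _ n n _ n])
  then have "A = W * A' * dag W"
    using W A unfolding unitary_mat_def by simp
  ultimately show ?thesis using W Bc \<open>dag B = B\<close> unfolding n_def by blast
qed

lemma dag_four_block_mat:
  assumes "A \<in> carrier_mat nr1 nc1" "B \<in> carrier_mat nr1 nc2"
    "C \<in> carrier_mat nr2 nc1" "D \<in> carrier_mat nr2 nc2"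
  shows "dag (four_block_mat A B C D) = four_block_mat (dag A) (dag C) (dag B) (dag D)"
  using assms by (intro eq_matI) auto

lemma conj_four_block_one_mat:
  assumes V: "V \<in> carrier_mat k k" and a: "a \<in> carrier_mat 1 1" and B: "B \<in> carrier_mat k k"
  shows "four_block_mat (1\<^sub>m 1) (0\<^sub>m 1 k) (0\<^sub>m k 1) V * four_block_mat a (0\<^sub>m 1 k) (0\<^sub>m k 1) B
      * dag (four_block_mat (1\<^sub>m 1) (0\<^sub>m 1 k) (0\<^sub>m k 1) V)
    = four_block_mat a (0\<^sub>m 1 k) (0\<^sub>m k 1) (V * B * dag V)"
  using assms by (simp add: dag_four_block_mat[of _ 1 1 _ k _ k] mult_four_block_mat[of _ 1 1 _ k _ k _ _ 1 _ k]
      mult_carrier_mat[of _ k k _ k])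

lemma unitary_mat_four_block_one_mat:
  assumes V: "unitary_mat k V"
  shows "unitary_mat (Suc k) (four_block_mat (1\<^sub>m 1) (0\<^sub>m 1 k) (0\<^sub>m k 1) V)"
proof -
  have Vc: "V \<in> carrier_mat k k" using V unitary_mat_carrier by auto
  have "dag (four_block_mat (1\<^sub>m 1) (0\<^sub>m 1 k) (0\<^sub>m k 1) V) * four_block_mat (1\<^sub>m 1) (0\<^sub>m 1 k) (0\<^sub>m k 1) V
      = four_block_mat (1\<^sub>m 1) (0\<^sub>m 1 k) (0\<^sub>m k 1) (dag V * V)"
    using Vc by (simp add: dag_four_block_mat[of _ 1 1 _ k _ k] mult_four_block_mat[of _ 1 1 _ k _ k _ _ 1 _ k]
        mult_carrier_mat[of _ k k _ k])
  then show ?thesis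
    using V Vc by (intro unitary_matI) (auto simp: unitary_mat_def)
qed

theorem hermitian_spectral_decomposition:
  assumes "A \<in> carrier_mat n n" and "dag A = A"
  shows "\<exists>V f. unitary_mat n V \<and> A = V * mat_diag n (\<lambda>i. complex_of_real (f i)) * dag V"
  using assms
proof (induction n arbitrary: A)
  case 0
  then have "A = 1\<^sub>m 0 * mat_diag 0 (\<lambda>_. 0) * dag (1\<^sub>m 0)"
    by (intro eq_matI) auto
  moreover have "unitary_mat 0 (1\<^sub>m 0)" unfolding unitary_mat_def by auto
  ultimately show ?case by (intro exI[of _ "1\<^sub>m 0"] exI[of _ "\<lambda>_. 0"]) simp
next
  case (Suc k A)
  obtain W e B where W: "unitary_mat (Suc k) W" and Bc: "B \<in> carrier_mat k k" and "dag B = B"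
    and A: "A = W * four_block_mat (mat_diag 1 (\<lambda>_. complex_of_real e)) (0\<^sub>m 1 k) (0\<^sub>m k 1) B * dag W"
    using hermitian_deflation[OF Suc.prems] by blast
  obtain V f where V: "unitary_mat k V" and B: "B = V * mat_diag k (\<lambda>i. complex_of_real (f i)) * dag V"
    using Suc.IH[OF Bc \<open>dag B = B\<close>] by blast
  define V' where "V' = four_block_mat (1\<^sub>m 1) (0\<^sub>m 1 k) (0\<^sub>m k 1) V"
  define g where "g = (\<lambda>i. if i = 0 then e else f (i - 1))"
  define D where "D = mat_diag (Suc k) (\<lambda>i. complex_of_real (g i))"
  have V': "unitary_mat (Suc k) V'" unfolding V'_def by (rule unitary_mat_four_block_one_mat[OF V])
  have c: "W \<in> carrier_mat (Suc k) (Suc k)" "V' \<in> carrier_mat (Suc k) (Suc k)"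
    "D \<in> carrier_mat (Suc k) (Suc k)"
    using W V' unitary_mat_carrier unfolding D_def by auto
  have "D = four_block_mat (mat_diag 1 (\<lambda>_. complex_of_real e)) (0\<^sub>m 1 k) (0\<^sub>m k 1)
      (mat_diag k (\<lambda>i. complex_of_real (f i)))"
    unfolding D_def g_def by (rule eq_matI) auto
  then have "four_block_mat (mat_diag 1 (\<lambda>_. complex_of_real e)) (0\<^sub>m 1 k) (0\<^sub>m k 1) B = V' * D * dag V'"
    unfolding B V'_def
    by (simp only:) (rule conj_four_block_one_mat[symmetric]; use V[THEN unitary_mat_carrier] in simp)
  then have "A = (W * V') * D * dag (W * V')"
    unfolding A using c
    by (simp add: dag_mult[of _ "Suc k" "Suc k"] assoc_mult_mat[of _ "Suc k" "Suc k" _ "Suc k" _ "Suc k"]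
        mult_carrier_mat[of _ "Suc k" "Suc k" _ "Suc k"])
  moreover have "unitary_mat (Suc k) (W * V')" by (rule unitary_mat_mult[OF W V'])
  ultimately show ?case unfolding D_def by blast
qed

section \<open>Square roots of positive semidefinite matrices\<close>

lemma psd_mat_conj:
  assumes A: "psd_mat n A" and U: "U \<in> carrier_mat n n"
  shows "psd_mat n (U * A * dag U)"
proof -
  have Ac: "A \<in> carrier_mat n n" and herm: "dag A = A"
    and nonneg: "\<forall>v\<in>carrier_vec n. 0 \<le> Re ((A *\<^sub>v v) \<bullet>c v)"
    using A unfolding psd_mat_def by auto
  have dU: "dag U \<in> carrier_mat n n" using U by auto
  have "dag (U * A * dag U) = U * A * dag U"
    using U Ac dU herm
    by (simp add: dag_mult[of _ n n _ n] assoc_mult_mat[of _ n n _ n _ n] mult_carrier_mat[of _ n n _ n])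
  moreover have "0 \<le> Re (((U * A * dag U) *\<^sub>v v) \<bullet>c v)" if v: "v \<in> carrier_vec n" for v
  proof -
    have "(U * A * dag U) *\<^sub>v v = U *\<^sub>v (A *\<^sub>v (dag U *\<^sub>v v))"
      using U Ac dU v
      by (simp add: assoc_mult_mat_vec[of _ n n _ n] mult_carrier_mat[of _ n n _ n]
          mult_mat_vec_carrier[of _ n n])
    then have "((U * A * dag U) *\<^sub>v v) \<bullet>c v = (A *\<^sub>v (dag U *\<^sub>v v)) \<bullet>c (dag U *\<^sub>v v)"
      using mult_mat_vec_cscalar_prod_dag[OF U, of "A *\<^sub>v (dag U *\<^sub>v v)" v] v Ac dU by simp
    then show ?thesis using nonneg dU v by simp
  qed
  ultimately show ?thesis unfolding psd_mat_def using U Ac by auto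
qed

lemma psd_mat_diag:
  assumes "\<And>i. i < n \<Longrightarrow> f i \<ge> 0"
  shows "psd_mat n (mat_diag n (\<lambda>i. complex_of_real (f i)))"
proof -
  let ?D = "mat_diag n (\<lambda>i. complex_of_real (f i))"
  have "0 \<le> Re ((?D *\<^sub>v v) \<bullet>c v)" if v: "v \<in> carrier_vec n" for v
  proof -
    have "(?D *\<^sub>v v) \<bullet>c v = (\<Sum>i<n. complex_of_real (f i) * v $ i * cnj (v $ i))"
      using v by (simp add: mat_diag_mult_vec cscalar_prod_sum[of _ n])
    also have "\<dots> = complex_of_real (\<Sum>i<n. f i * (cmod (v $ i))\<^sup>2)"
      unfolding of_real_sum
      by (intro sum.cong refl) (simp add: mult.assoc complex_norm_square del: of_real_power)
    finally have "Re ((?D *\<^sub>v v) \<bullet>c v) = (\<Sum>i<n. f i * (cmod (v $ i))\<^sup>2)"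
      by (simp only: Re_complex_of_real)
    with assms show ?thesis by (auto intro: sum_nonneg)
  qed
  then show ?thesis unfolding psd_mat_def by (auto simp: dag_mat_diag intro!: eq_matI)
qed

lemma psd_mat_eigenvalues_nonneg:
  assumes A: "psd_mat n A" and V: "unitary_mat n V"
    and A_eq: "A = V * mat_diag n (\<lambda>i. complex_of_real (f i)) * dag V" and i: "i < n"
  shows "f i \<ge> 0"
proof -
  define D where "D = mat_diag n (\<lambda>i. complex_of_real (f i))"
  have Vc: "V \<in> carrier_mat n n" "dag V \<in> carrier_mat n n" using V unitary_mat_carrier by auto
  have Dc: "D \<in> carrier_mat n n" unfolding D_def by simp
  have "dag V * A * dag (dag V) = (dag V * V) * D * (dag V * V)"
    unfolding A_eq D_def[symmetric] using Vc Dc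
    by (simp add: assoc_mult_mat[of _ n n _ n _ n] mult_carrier_mat[of _ n n _ n])
  then have "dag V * A * dag (dag V) = D" using V Dc unfolding unitary_mat_def by simp
  then have "psd_mat n D" using psd_mat_conj[OF A Vc(2)] by simp
  then have "0 \<le> Re ((D *\<^sub>v unit_vec n i) \<bullet>c unit_vec n i)" unfolding psd_mat_def by auto
  moreover have "(D *\<^sub>v unit_vec n i) \<bullet>c unit_vec n i = complex_of_real (f i)"
  proof -
    have "(D *\<^sub>v unit_vec n i) \<bullet>c unit_vec n i
        = (\<Sum>j<n. complex_of_real (f j) * unit_vec n i $ j * cnj (unit_vec n i $ j))"
      unfolding D_def by (simp add: mat_diag_mult_vec cscalar_prod_sum[of _ n])
    also have "\<dots> = (\<Sum>j<n. if j = i then complex_of_real (f i) else 0)"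
      using i by (intro sum.cong) auto
    finally show ?thesis using i by simp
  qed
  ultimately show ?thesis by simp
qed

lemma psd_sqrt_exists:
  assumes A: "psd_mat n A"
  shows "\<exists>B. psd_mat n B \<and> B * B = A"
proof -
  have Ac: "A \<in> carrier_mat n n" and herm: "dag A = A" using A unfolding psd_mat_def by auto
  obtain V f where V: "unitary_mat n V" and A_eq: "A = V * mat_diag n (\<lambda>i. complex_of_real (f i)) * dag V"
    using hermitian_spectral_decomposition[OF Ac herm] by blast
  have f: "\<And>i. i < n \<Longrightarrow> f i \<ge> 0" using psd_mat_eigenvalues_nonneg[OF A V A_eq] by blast
  define S where "S = mat_diag n (\<lambda>i. complex_of_real (sqrt (f i)))"
  have Vc: "V \<in> carrier_mat n n" "dag V \<in> carrier_mat n n" using V unitary_mat_carrier by auto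
  have Sc: "S \<in> carrier_mat n n" unfolding S_def by simp
  have "(V * S * dag V) * (V * S * dag V) = V * (S * (dag V * V) * S) * dag V"
    using Vc Sc by (simp add: assoc_mult_mat[of _ n n _ n _ n] mult_carrier_mat[of _ n n _ n])
  also have "S * (dag V * V) * S = mat_diag n (\<lambda>i. complex_of_real (f i))"
    using V Sc unfolding unitary_mat_def S_def
    by (simp add: mat_diag_diag) (use f in \<open>auto simp flip: of_real_mult intro!: eq_matI\<close>)
  finally have "(V * S * dag V) * (V * S * dag V) = A" unfolding A_eq .
  moreover have "psd_mat n (V * S * dag V)"
    unfolding S_def by (rule psd_mat_conj[OF psd_mat_diag Vc(1)]) (use f in auto)
  ultimately show ?thesis by blast
qed

lemma mat_diag_intertwine_sqrt:
  fixes b c :: "nat \<Rightarrow> real"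
  assumes M: "M \<in> carrier_mat n n" and b: "\<And>i. i < n \<Longrightarrow> b i \<ge> 0" and c: "\<And>i. i < n \<Longrightarrow> c i \<ge> 0"
    and sq: "mat_diag n (\<lambda>i. complex_of_real ((b i)\<^sup>2)) * M = M * mat_diag n (\<lambda>i. complex_of_real ((c i)\<^sup>2))"
  shows "mat_diag n (\<lambda>i. complex_of_real (b i)) * M = M * mat_diag n (\<lambda>i. complex_of_real (c i))"
proof -
  have "complex_of_real (b i) * M $$ (i, j) = M $$ (i, j) * complex_of_real (c j)" if "i < n" "j < n" for i j
  proof -
    have "complex_of_real ((b i)\<^sup>2) * M $$ (i, j) = M $$ (i, j) * complex_of_real ((c j)\<^sup>2)"
      using arg_cong[OF sq, of "\<lambda>X. X $$ (i, j)"] that M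
      by (simp add: mat_diag_mult_left[OF M] mat_diag_mult_right[OF M])
    then have "M $$ (i, j) = 0 \<or> (b i)\<^sup>2 = (c j)\<^sup>2"
      by (metis mult.commute mult_cancel_left of_real_eq_iff)
    then have "M $$ (i, j) = 0 \<or> b i = c j"
      using b c that by (metis power2_eq_iff_nonneg)
    then show ?thesis by auto
  qed
  then show ?thesis
    using M by (intro eq_matI) (auto simp: mat_diag_mult_left[OF M] mat_diag_mult_right[OF M])
qed

lemma psd_sqrt_unique:
  assumes B: "psd_mat n B" and C: "psd_mat n C" and BC: "B * B = C * C"
  shows "B = C"
proof -
  obtain V b where V: "unitary_mat n V" and B_eq: "B = V * mat_diag n (\<lambda>i. complex_of_real (b i)) * dag V"
    using hermitian_spectral_decomposition B unfolding psd_mat_def by blast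
  obtain W c where W: "unitary_mat n W" and C_eq: "C = W * mat_diag n (\<lambda>i. complex_of_real (c i)) * dag W"
    using hermitian_spectral_decomposition C unfolding psd_mat_def by blast
  have b: "\<And>i. i < n \<Longrightarrow> b i \<ge> 0" using psd_mat_eigenvalues_nonneg[OF B V B_eq] by blast
  have c: "\<And>i. i < n \<Longrightarrow> c i \<ge> 0" using psd_mat_eigenvalues_nonneg[OF C W C_eq] by blast
  define Db where "Db = mat_diag n (\<lambda>i. complex_of_real (b i))"
  define Dc where "Dc = mat_diag n (\<lambda>i. complex_of_real (c i))"
  define M where "M = dag V * W"
  have Vc: "V \<in> carrier_mat n n" "dag V \<in> carrier_mat n n" using V unitary_mat_carrier by auto
  have Wc: "W \<in> carrier_mat n n" "dag W \<in> carrier_mat n n" using W unitary_mat_carrier by auto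
  have Dc: "Db \<in> carrier_mat n n" "Dc \<in> carrier_mat n n" unfolding Db_def Dc_def by auto
  have Mc: "M \<in> carrier_mat n n" unfolding M_def by (rule mult_carrier_mat[OF Vc(2) Wc(1)])
  have VV: "dag V * V = 1\<^sub>m n" "V * dag V = 1\<^sub>m n" using V unfolding unitary_mat_def by auto
  have WW: "dag W * W = 1\<^sub>m n" "W * dag W = 1\<^sub>m n" using W unfolding unitary_mat_def by auto
  note simps = assoc_mult_mat[of _ n n _ n _ n] mult_carrier_mat[of _ n n _ n]
  have "dag V * (B * B) * W = (dag V * V) * Db * (dag V * V) * Db * M"
    unfolding B_eq Db_def[symmetric] M_def using Vc Wc Dc by (simp add: simps)
  also have "\<dots> = (Db * Db) * M" unfolding VV using Dc Mc by (simp add: simps)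
  finally have L: "dag V * (B * B) * W = (Db * Db) * M" .
  have "dag V * (C * C) * W = M * Dc * (dag W * W) * Dc * (dag W * W)"
    unfolding C_eq Dc_def[symmetric] M_def using Vc Wc Dc by (simp add: simps)
  also have "\<dots> = M * (Dc * Dc)" unfolding WW using Dc Mc by (simp add: simps)
  finally have R: "dag V * (C * C) * W = M * (Dc * Dc)" .
  have "Db * M = M * Dc"
    unfolding Db_def Dc_def
  proof (rule mat_diag_intertwine_sqrt[OF Mc b c])
    show "mat_diag n (\<lambda>i. complex_of_real ((b i)\<^sup>2)) * M = M * mat_diag n (\<lambda>i. complex_of_real ((c i)\<^sup>2))"
      using L R BC unfolding Db_def Dc_def mat_diag_diag by (simp add: power2_eq_square)
  qed
  have "B = V * (Db * M) * dag W"
    unfolding B_eq Db_def[symmetric] M_def using Vc Wc Dc by (simp add: simps WW(2))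
  also have "\<dots> = (V * dag V) * W * Dc * dag W"
    unfolding \<open>Db * M = M * Dc\<close> unfolding M_def using Vc Wc Dc by (simp add: simps)
  also have "\<dots> = C"
    unfolding C_eq Dc_def[symmetric] VV using Wc by simp
  finally show ?thesis .
qed

lemma msqrt_eqI:
  assumes "psd_mat n A" "psd_mat n B" "B * B = A"
  shows "msqrt A = B"
proof -
  have "dim_row A = n" using assms(1) unfolding psd_mat_def by auto
  then show ?thesis unfolding msqrt_def using assms psd_sqrt_unique by (intro the_equality) auto
qed

lemma fidelity_self:
  assumes "density_mat n \<sigma>"
  shows "fidelity \<sigma> \<sigma> = 1"
proof -
  have psd: "psd_mat n \<sigma>" and tr: "mtrace \<sigma> = 1" using assms unfolding density_mat_def by auto
  obtain B where B: "psd_mat n B" and BB: "B * B = \<sigma>" using psd_sqrt_exists[OF psd] by blast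
  have Bc: "B \<in> carrier_mat n n" using B unfolding psd_mat_def by auto
  have sqrt_\<sigma>: "msqrt \<sigma> = B" by (rule msqrt_eqI[OF psd B BB])
  have "B * \<sigma> * B = \<sigma> * \<sigma>" unfolding BB[symmetric] using Bc
    by (simp add: assoc_mult_mat[of _ n n _ n _ n] mult_carrier_mat[of _ n n _ n])
  moreover have "psd_mat n (B * \<sigma> * B)" using psd_mat_conj[OF psd Bc] B unfolding psd_mat_def by metis
  ultimately have "msqrt (B * \<sigma> * B) = \<sigma>" using msqrt_eqI[OF _ psd] by metis
  then show ?thesis unfolding fidelity_def sqrt_\<sigma> by (simp add: tr)
qed

lemma sum_Pow_insert:
  assumes "finite S" "k \<notin> S"
  shows "(\<Sum>a\<in>Pow (insert k S). g a) = (\<Sum>a\<in>Pow S. g a) + (\<Sum>a\<in>Pow S. g (insert k a))"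
proof -
  have inj: "inj_on (insert k) (Pow S)"
    using assms by (intro inj_onI) (metis PowD insert_ident subsetD)
  have "(\<Sum>a\<in>Pow (insert k S). g a) = (\<Sum>a\<in>Pow S. g a) + (\<Sum>a\<in>insert k ` Pow S. g a)"
    unfolding Pow_insert by (rule sum.union_disjoint) (use assms in auto)
  also have "(\<Sum>a\<in>insert k ` Pow S. g a) = (\<Sum>a\<in>Pow S. g (insert k a))"
    by (rule sum.reindex_cong[OF inj refl refl])
  finally show ?thesis .
qed

(* Summed entrywise, so that the empty sum is the d x d zero matrix. *)
definition mat_sum :: "nat \<Rightarrow> 'b set \<Rightarrow> ('b \<Rightarrow> complex mat) \<Rightarrow> complex mat" where
  "mat_sum d S f = mat d d (\<lambda>(i, j). \<Sum>s\<in>S. f s $$ (i, j))"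

lemma mat_sum_carrier [simp]: "mat_sum d S f \<in> carrier_mat d d"
  and dim_mat_sum [simp]: "dim_row (mat_sum d S f) = d" "dim_col (mat_sum d S f) = d"
  and index_mat_sum [simp]: "i < d \<Longrightarrow> j < d \<Longrightarrow> mat_sum d S f $$ (i, j) = (\<Sum>s\<in>S. f s $$ (i, j))"
  unfolding mat_sum_def by auto

lemma mat_sum_cong: "(\<And>s. s \<in> S \<Longrightarrow> f s = g s) \<Longrightarrow> mat_sum d S f = mat_sum d S g"
  unfolding mat_sum_def by (intro eq_matI) auto

lemma mult_mat_sum_left:
  assumes M: "M \<in> carrier_mat d d" and f: "\<And>s. s \<in> S \<Longrightarrow> f s \<in> carrier_mat d d"
  shows "M * mat_sum d S f = mat_sum d S (\<lambda>s. M * f s)"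
proof (rule eq_matI)
  fix i j assume "i < dim_row (mat_sum d S (\<lambda>s. M * f s))" "j < dim_col (mat_sum d S (\<lambda>s. M * f s))"
  then have i: "i < d" and j: "j < d" by auto
  have "(M * mat_sum d S f) $$ (i, j) = (\<Sum>l<d. M $$ (i, l) * mat_sum d S f $$ (l, j))"
    by (rule index_mult_mat_sum) (use M i j in auto)
  also have "\<dots> = (\<Sum>l<d. \<Sum>s\<in>S. M $$ (i, l) * f s $$ (l, j))"
    using j by (simp add: sum_distrib_left)
  also have "\<dots> = (\<Sum>s\<in>S. (M * f s) $$ (i, j))"
    by (subst sum.swap) (intro sum.cong refl index_mult_mat_sum[symmetric]; use M f i j in auto)
  finally show "(M * mat_sum d S f) $$ (i, j) = mat_sum d S (\<lambda>s. M * f s) $$ (i, j)" using i j by simp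
qed (use M in auto)

lemma mult_mat_sum_right:
  assumes M: "M \<in> carrier_mat d d" and f: "\<And>s. s \<in> S \<Longrightarrow> f s \<in> carrier_mat d d"
  shows "mat_sum d S f * M = mat_sum d S (\<lambda>s. f s * M)"
proof (rule eq_matI)
  fix i j assume "i < dim_row (mat_sum d S (\<lambda>s. f s * M))" "j < dim_col (mat_sum d S (\<lambda>s. f s * M))"
  then have i: "i < d" and j: "j < d" by auto
  have "(mat_sum d S f * M) $$ (i, j) = (\<Sum>l<d. mat_sum d S f $$ (i, l) * M $$ (l, j))"
    by (rule index_mult_mat_sum) (use M i j in auto)
  also have "\<dots> = (\<Sum>l<d. \<Sum>s\<in>S. f s $$ (i, l) * M $$ (l, j))"
    using i by (simp add: sum_distrib_right)
  also have "\<dots> = (\<Sum>s\<in>S. (f s * M) $$ (i, j))"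
    by (subst sum.swap) (intro sum.cong refl index_mult_mat_sum[symmetric]; use M f i j in auto)
  finally show "(mat_sum d S f * M) $$ (i, j) = mat_sum d S (\<lambda>s. f s * M) $$ (i, j)" using i j by simp
qed (use M in auto)

lemma dag_mat_sum:
  assumes "\<And>s. s \<in> S \<Longrightarrow> f s \<in> carrier_mat d d"
  shows "dag (mat_sum d S f) = mat_sum d S (\<lambda>s. dag (f s))"
  using assms by (intro eq_matI) (auto intro!: sum.cong simp: carrier_matD[OF assms])

lemma mat_sum_add:
  assumes "\<And>s. s \<in> S \<Longrightarrow> f s \<in> carrier_mat d d" "\<And>s. s \<in> S \<Longrightarrow> g s \<in> carrier_mat d d"
  shows "mat_sum d S (\<lambda>s. f s + g s) = mat_sum d S f + mat_sum d S g"
proof (rule eq_matI)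
  fix i j assume "i < dim_row (mat_sum d S f + mat_sum d S g)" "j < dim_col (mat_sum d S f + mat_sum d S g)"
  then have i: "i < d" and j: "j < d" by auto
  have "(\<Sum>s\<in>S. (f s + g s) $$ (i, j)) = (\<Sum>s\<in>S. f s $$ (i, j) + g s $$ (i, j))"
    using assms i j by (intro sum.cong refl) (auto simp: carrier_matD[OF assms(2)])
  then show "mat_sum d S (\<lambda>s. f s + g s) $$ (i, j) = (mat_sum d S f + mat_sum d S g) $$ (i, j)"
    using i j by (simp add: sum.distrib)
qed auto

lemma mat_sum_Pow_insert:
  assumes "finite S" "k \<notin> S"
  shows "mat_sum d (Pow (insert k S)) f = mat_sum d (Pow S) f + mat_sum d (Pow S) (\<lambda>a. f (insert k a))"
  using assms by (intro eq_matI) (auto simp: sum_Pow_insert)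

definition controlled_prod ::
    "nat \<Rightarrow> (nat \<Rightarrow> complex mat) \<Rightarrow> nat list \<Rightarrow> (nat \<Rightarrow> bool) \<Rightarrow> complex mat" where
  "controlled_prod d C ks x = foldr (\<lambda>k P. (if x k then C k else 1\<^sub>m d) * P) ks (1\<^sub>m d)"

lemma controlled_prod_Nil [simp]: "controlled_prod d C [] x = 1\<^sub>m d"
  unfolding controlled_prod_def by simp

lemma controlled_prod_Cons:
  "controlled_prod d C (k # ks) x = (if x k then C k else 1\<^sub>m d) * controlled_prod d C ks x"
  unfolding controlled_prod_def by simp

lemma controlled_prod_carrier:
  "(\<And>k. k \<in> set ks \<Longrightarrow> C k \<in> carrier_mat d d) \<Longrightarrow> controlled_prod d C ks x \<in> carrier_mat d d"
proof (induction ks)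
  case (Cons k ks)
  then have "C k \<in> carrier_mat d d" "controlled_prod d C ks x \<in> carrier_mat d d" by auto
  then show ?case by (simp add: controlled_prod_Cons mult_carrier_mat[of _ d d _ d])
qed simp

lemma controlled_prod_append:
  assumes "\<And>k. k \<in> set (ks @ ls) \<Longrightarrow> C k \<in> carrier_mat d d"
  shows "controlled_prod d C (ks @ ls) x = controlled_prod d C ks x * controlled_prod d C ls x"
  using assms
proof (induction ks)
  case Nil
  then show ?case using controlled_prod_carrier[of ls C d x] by simp
next
  case (Cons k ks)
  have "controlled_prod d C ks x \<in> carrier_mat d d" "controlled_prod d C ls x \<in> carrier_mat d d"
    using Cons.prems by (auto intro: controlled_prod_carrier)
  with Cons show ?case
    by (simp add: controlled_prod_Cons assoc_mult_mat[of _ d d _ d _ d])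
qed

lemma controlled_prod_cong:
  "(\<And>k. k \<in> set ks \<Longrightarrow> x k = y k) \<Longrightarrow> controlled_prod d C ks x = controlled_prod d C ks y"
  by (induction ks) (auto simp: controlled_prod_Cons)

lemma dag_controlled_prod:
  assumes C: "\<And>k. C k \<in> carrier_mat d d"
  shows "dag (controlled_prod d C ks x) = controlled_prod d (\<lambda>k. dag (C k)) (rev ks) x"
proof (induction ks)
  case (Cons k ks)
  have "controlled_prod d C ks x \<in> carrier_mat d d" using C by (intro controlled_prod_carrier)
  then show ?case
    using C Cons.IH
    by (simp add: controlled_prod_Cons controlled_prod_append dag_mult[of _ d d _ d]
        right_mult_one_mat[of "dag (C k)" d d])
qed simp

lemma controlled_prod_conj:
  assumes U: "unitary_mat d U" and C: "\<And>k. C k \<in> carrier_mat d d"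
  shows "controlled_prod d (\<lambda>k. U * C k * dag U) ks x = U * controlled_prod d C ks x * dag U"
proof (induction ks)
  case Nil
  then show ?case using U unfolding unitary_mat_def by (simp add: right_mult_one_mat[of U d d])
next
  case (Cons k ks)
  have c: "U \<in> carrier_mat d d" "dag U \<in> carrier_mat d d" "controlled_prod d C ks x \<in> carrier_mat d d"
    using U C unitary_mat_carrier by (auto intro: controlled_prod_carrier)
  have "U * C k * dag U * (U * controlled_prod d C ks x * dag U)
      = U * C k * (dag U * U) * controlled_prod d C ks x * dag U"
    using c C by (simp add: assoc_mult_mat[of _ d d _ d _ d] mult_carrier_mat[of _ d d _ d])
  then show ?case
    using c C U Cons.IH unfolding unitary_mat_def
    by (simp add: controlled_prod_Cons assoc_mult_mat[of _ d d _ d _ d] mult_carrier_mat[of _ d d _ d]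
        carrier_matD[OF c(1)])
qed

section \<open>Twirling by sign flips and cyclic shifts\<close>

definition twirl :: "nat \<Rightarrow> (nat \<Rightarrow> complex mat) \<Rightarrow> nat \<Rightarrow> complex mat \<Rightarrow> complex mat" where
  "twirl d V m A = mat_sum d (Pow {1..m}) (\<lambda>a.
     dag (controlled_prod d V [1..<Suc m] (\<lambda>k. k \<in> a)) * A * controlled_prod d V [1..<Suc m] (\<lambda>k. k \<in> a))"

lemma twirl_carrier [simp]: "twirl d V m A \<in> carrier_mat d d"
  and dim_twirl [simp]: "dim_row (twirl d V m A) = d" "dim_col (twirl d V m A) = d"
  unfolding twirl_def by auto

lemma twirl_0: "A \<in> carrier_mat d d \<Longrightarrow> twirl d V 0 A = A"
  unfolding twirl_def by (intro eq_matI) auto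

lemma twirl_Suc:
  assumes A: "A \<in> carrier_mat d d" and V: "\<And>k. V k \<in> carrier_mat d d"
  shows "twirl d V (Suc m) A = twirl d V m A + dag (V (Suc m)) * twirl d V m A * V (Suc m)"
proof -
  define W where "W = (\<lambda>a. controlled_prod d V [1..<Suc m] (\<lambda>k. k \<in> a))"
  define W' where "W' = (\<lambda>a. controlled_prod d V [1..<Suc (Suc m)] (\<lambda>k. k \<in> a))"
  have Wc: "W a \<in> carrier_mat d d" for a unfolding W_def by (rule controlled_prod_carrier) (use V in auto)
  have Vc: "V (Suc m) \<in> carrier_mat d d" "dag (V (Suc m)) \<in> carrier_mat d d" using V by auto
  have W'_split: "W' a = W a * controlled_prod d V [Suc m] (\<lambda>k. k \<in> a)" for a
    unfolding W'_def W_def using V by (simp add: controlled_prod_append)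
  have W'_old: "W' a = W a" if "a \<in> Pow {1..m}" for a
    using that Wc[of a] unfolding W'_split by (auto simp: controlled_prod_Cons)
  have W'_new: "W' (insert (Suc m) a) = W a * V (Suc m)" for a
  proof -
    have "W (insert (Suc m) a) = W a" unfolding W_def by (rule controlled_prod_cong) auto
    then show ?thesis unfolding W'_split using Vc by (simp add: controlled_prod_Cons)
  qed
  have tw: "twirl d V m A = mat_sum d (Pow {1..m}) (\<lambda>a. dag (W a) * A * W a)"
    unfolding twirl_def W_def ..
  have Wc': "\<And>a. dag (W a) * A * W a \<in> carrier_mat d d"
    using Wc A by (meson dag_carrier_matI mult_carrier_mat)
  have "twirl d V (Suc m) A = mat_sum d (Pow (insert (Suc m) {1..m})) (\<lambda>a. dag (W' a) * A * W' a)"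
    unfolding twirl_def W'_def by (simp add: atLeastAtMostSuc_conv)
  also have "\<dots> = mat_sum d (Pow {1..m}) (\<lambda>a. dag (W' a) * A * W' a)
      + mat_sum d (Pow {1..m}) (\<lambda>a. dag (W' (insert (Suc m) a)) * A * W' (insert (Suc m) a))"
    by (rule mat_sum_Pow_insert) auto
  also have "mat_sum d (Pow {1..m}) (\<lambda>a. dag (W' a) * A * W' a) = twirl d V m A"
    unfolding tw by (rule mat_sum_cong) (simp only: W'_old)
  also have "mat_sum d (Pow {1..m}) (\<lambda>a. dag (W' (insert (Suc m) a)) * A * W' (insert (Suc m) a))
      = mat_sum d (Pow {1..m}) (\<lambda>a. dag (V (Suc m)) * (dag (W a) * A * W a) * V (Suc m))"
    unfolding W'_new using Wc Vc A
    by (intro mat_sum_cong)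
      (simp add: dag_mult[of _ d d _ d] assoc_mult_mat[of _ d d _ d _ d] mult_carrier_mat[of _ d d _ d])
  also have "\<dots> = dag (V (Suc m)) * twirl d V m A * V (Suc m)"
    unfolding tw using Wc' Vc
    by (simp add: mult_mat_sum_left mult_mat_sum_right mult_carrier_mat[of _ d d _ d])
  finally show ?thesis .
qed

lemma add_mod_cancel_left_nat:
  assumes "((i::nat) + t) mod d = (i + t') mod d" "t < d" "t' < d"
  shows "t = t'"
  using assms by (metis cong_def cong_add_lcancel_nat cong_less_modulus_unique_nat)

lemma sum_mod_shift:
  assumes "(d::nat) > 0"
  shows "(\<Sum>t<d. f ((i + t) mod d)) = (\<Sum>t<d. f t)"
proof -
  have inj: "inj_on (\<lambda>t. (i + t) mod d) {..<d}"
    by (rule inj_onI) (metis add_mod_cancel_left_nat lessThan_iff)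
  have "(\<lambda>t. (i + t) mod d) ` {..<d} = {..<d}"
    by (rule endo_inj_surj[OF _ _ inj]) (use assms in auto)
  then show ?thesis using sum.reindex[OF inj, of f] by simp
qed

lemma sum_lessThan_double:
  "(\<Sum>t<(a::nat) + a. f t) = (\<Sum>t<a. f t) + (\<Sum>t<a. f (a + t))"
proof -
  have "(\<Sum>t<a + a. f t) = (\<Sum>t\<in>{0..<a}. f t) + (\<Sum>t\<in>{a..<a + a}. f t)"
    by (subst sum.atLeastLessThan_concat) (auto simp: atLeast0LessThan)
  also have "(\<Sum>t\<in>{a..<a + a}. f t) = (\<Sum>t\<in>{0 + a..<a + a}. f t)" by simp
  also have "\<dots> = (\<Sum>t\<in>{0..<a}. f (t + a))" by (rule sum.shift_bounds_nat_ivl)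
  finally show ?thesis by (simp add: atLeast0LessThan add.commute)
qed

definition sign_flip_mat :: "nat \<Rightarrow> nat \<Rightarrow> complex mat" where
  "sign_flip_mat d s = mat_diag d (\<lambda>i. if i = s then -1 else 1)"

definition cyclic_shift_mat :: "nat \<Rightarrow> nat \<Rightarrow> complex mat" where
  "cyclic_shift_mat d t = mat d d (\<lambda>(i, j). if i = (j + t) mod d then 1 else 0)"

lemma sign_flip_mat_carrier [simp]: "sign_flip_mat d s \<in> carrier_mat d d"
  and dim_sign_flip_mat [simp]: "dim_row (sign_flip_mat d s) = d" "dim_col (sign_flip_mat d s) = d"
  unfolding sign_flip_mat_def by auto

lemma cyclic_shift_mat_carrier [simp]: "cyclic_shift_mat d t \<in> carrier_mat d d"
  and dim_cyclic_shift_mat [simp]: "dim_row (cyclic_shift_mat d t) = d" "dim_col (cyclic_shift_mat d t) = d"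
  and index_cyclic_shift_mat [simp]:
    "i < d \<Longrightarrow> j < d \<Longrightarrow> cyclic_shift_mat d t $$ (i, j) = (if i = (j + t) mod d then 1 else 0)"
  unfolding cyclic_shift_mat_def by auto

lemma conj_sign_flip_mat_index:
  assumes B: "B \<in> carrier_mat d d" and ij: "i < d" "j < d"
  shows "(dag (sign_flip_mat d s) * B * sign_flip_mat d s) $$ (i, j)
     = (if i = s then -1 else 1) * B $$ (i, j) * (if j = s then -1 else 1)"
proof -
  have "dag (sign_flip_mat d s) = sign_flip_mat d s"
    unfolding sign_flip_mat_def dag_mat_diag by (intro eq_matI) auto
  then show ?thesis
    using B ij unfolding sign_flip_mat_def
    by (simp add: mat_diag_mult_left[OF B] mat_diag_mult_right[of _ d d])
qed

lemma conj_cyclic_shift_mat_index: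
  assumes d: "d > 0" and B: "B \<in> carrier_mat d d" and ij: "i < d" "j < d"
  shows "(dag (cyclic_shift_mat d t) * B * cyclic_shift_mat d t) $$ (i, j) = B $$ ((i + t) mod d, (j + t) mod d)"
proof -
  let ?P = "cyclic_shift_mat d t"
  have dP: "dag ?P \<in> carrier_mat d d" by simp
  have row: "(dag ?P * B) $$ (i, l) = B $$ ((i + t) mod d, l)" if l: "l < d" for l
  proof -
    have "(dag ?P * B) $$ (i, l) = (\<Sum>k<d. dag ?P $$ (i, k) * B $$ (k, l))"
      by (rule index_mult_mat_sum[OF dP B ij(1) l])
    also have "\<dots> = (\<Sum>k<d. if k = (i + t) mod d then B $$ (k, l) else 0)"
      using ij by (intro sum.cong refl) auto
    finally show ?thesis using d by simp
  qed
  have "(dag ?P * B * ?P) $$ (i, j) = (\<Sum>l<d. (dag ?P * B) $$ (i, l) * ?P $$ (l, j))"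
    by (rule index_mult_mat_sum) (use B ij mult_carrier_mat[OF dP B] in auto)
  also have "\<dots> = (\<Sum>l<d. if l = (j + t) mod d then B $$ ((i + t) mod d, l) else 0)"
    using ij by (intro sum.cong refl) (auto simp: row simp del: index_mult_mat)
  finally show ?thesis using d by simp
qed

lemma sign_flip_mat_unitary: "unitary_mat d (sign_flip_mat d s)"
  by (rule unitary_matI) (auto simp: sign_flip_mat_def dag_mat_diag intro!: eq_matI)

lemma cyclic_shift_mat_unitary:
  assumes d: "d > 0"
  shows "unitary_mat d (cyclic_shift_mat d t)"
proof (rule unitary_matI)
  show "dag (cyclic_shift_mat d t) * cyclic_shift_mat d t = 1\<^sub>m d"
  proof (rule eq_matI)
    fix i j assume "i < dim_row (1\<^sub>m d)" "j < dim_col (1\<^sub>m d)"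
    then have ij: "i < d" "j < d" by auto
    have "dag (cyclic_shift_mat d t) * cyclic_shift_mat d t
        = dag (cyclic_shift_mat d t) * 1\<^sub>m d * cyclic_shift_mat d t"
      by (simp add: right_mult_one_mat[of _ d d])
    then have "(dag (cyclic_shift_mat d t) * cyclic_shift_mat d t) $$ (i, j)
        = 1\<^sub>m d $$ ((i + t) mod d, (j + t) mod d)"
      using conj_cyclic_shift_mat_index[OF d _ ij, of "1\<^sub>m d" t] by simp
    also have "\<dots> = 1\<^sub>m d $$ (i, j)"
      using ij d add_mod_cancel_left_nat[of t i d j] by (auto simp: add.commute)
    finally show "(dag (cyclic_shift_mat d t) * cyclic_shift_mat d t) $$ (i, j) = 1\<^sub>m d $$ (i, j)" .
  qed auto
qed simp

definition twirl_check :: "nat \<Rightarrow> nat \<Rightarrow> complex mat" where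
  "twirl_check d k = (if k \<le> d then sign_flip_mat d (k - 1) else cyclic_shift_mat d (2 ^ (k - d - 1)))"

lemma twirl_check_carrier [simp]: "twirl_check d k \<in> carrier_mat d d"
  unfolding twirl_check_def by simp

lemma twirl_check_unitary: "d > 0 \<Longrightarrow> unitary_mat d (twirl_check d k)"
  unfolding twirl_check_def using sign_flip_mat_unitary cyclic_shift_mat_unitary by simp

lemma twirl_sign_flips_index:
  assumes A: "A \<in> carrier_mat d d" and r: "r \<le> d" and ij: "i < d" "j < d"
  shows "twirl d (twirl_check d) r A $$ (i, j)
    = 2 ^ r * A $$ (i, j) * (if \<forall>s<r. (i = s) = (j = s) then 1 else 0)"
  using r
proof (induction r)
  case 0
  then show ?case using twirl_0[OF A] by simp
next
  case (Suc r)
  define T where "T = twirl d (twirl_check d) r A"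
  have T: "T \<in> carrier_mat d d" unfolding T_def by simp
  have "twirl_check d (Suc r) = sign_flip_mat d r" using Suc.prems unfolding twirl_check_def by simp
  then have "twirl d (twirl_check d) (Suc r) A $$ (i, j)
      = T $$ (i, j) + (dag (sign_flip_mat d r) * T * sign_flip_mat d r) $$ (i, j)"
    unfolding twirl_Suc[OF A twirl_check_carrier] T_def[symmetric] using ij T by simp
  also have "\<dots> = T $$ (i, j) * (1 + (if i = r then -1 else 1) * (if j = r then -1 else 1))"
    unfolding conj_sign_flip_mat_index[OF T ij] by (simp add: algebra_simps)
  finally show ?case
    unfolding T_def Suc.IH[OF Suc_leD[OF Suc.prems]] by (auto simp: less_Suc_eq)
qed

lemma twirl_sign_flips_diagonal:
  assumes A: "A \<in> carrier_mat d d" and ij: "i < d" "j < d"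
  shows "twirl d (twirl_check d) d A $$ (i, j) = (if i = j then 2 ^ d * A $$ (i, i) else 0)"
proof -
  have "(\<forall>s<d. (i = s) = (j = s)) = (i = j)" using ij by auto
  then show ?thesis unfolding twirl_sign_flips_index[OF A le_refl ij] by simp
qed

lemma twirl_cyclic_shifts_index:
  assumes A: "A \<in> carrier_mat d d" and d: "d = 2 ^ n" and r: "r \<le> n" and ij: "i < d" "j < d"
  shows "twirl d (twirl_check d) (d + r) A $$ (i, j) =
     (if i = j then 2 ^ d * (\<Sum>t<2 ^ r. A $$ ((i + t) mod d, (i + t) mod d)) else 0)"
  using r ij
proof (induction r arbitrary: i j)
  case 0
  then show ?case using twirl_sign_flips_diagonal[OF A] by simp
next
  case (Suc r i j)
  have d0: "d > 0" using d by simp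
  define T where "T = twirl d (twirl_check d) (d + r) A"
  define t0 where "t0 = (2::nat) ^ r"
  define diag_sum where "diag_sum i = (\<Sum>t<t0. A $$ ((i + t) mod d, (i + t) mod d))" for i
  have T: "T \<in> carrier_mat d d" unfolding T_def by simp
  have IH: "T $$ (i, j) = (if i = j then 2 ^ d * diag_sum i else 0)" if "i < d" "j < d" for i j
    unfolding T_def diag_sum_def t0_def using Suc that by simp
  have "twirl_check d (Suc (d + r)) = cyclic_shift_mat d t0" unfolding twirl_check_def t0_def by simp
  then have "twirl d (twirl_check d) (d + Suc r) A $$ (i, j)
      = T $$ (i, j) + (dag (cyclic_shift_mat d t0) * T * cyclic_shift_mat d t0) $$ (i, j)"
    unfolding add_Suc_right twirl_Suc[OF A twirl_check_carrier] T_def[symmetric] using Suc.prems T by simp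
  also have "\<dots> = T $$ (i, j) + T $$ ((i + t0) mod d, (j + t0) mod d)"
    unfolding conj_cyclic_shift_mat_index[OF d0 T Suc.prems(2,3)] ..
  also have "\<dots> = (if i = j then 2 ^ d * (diag_sum i + diag_sum ((i + t0) mod d)) else 0)"
    using Suc.prems d0 add_mod_cancel_left_nat[of t0 i d j] by (auto simp: IH add.commute algebra_simps)
  also have "diag_sum i + diag_sum ((i + t0) mod d) = (\<Sum>t<2 ^ Suc r. A $$ ((i + t) mod d, (i + t) mod d))"
    unfolding diag_sum_def t0_def by (simp add: mult_2 sum_lessThan_double mod_add_left_eq add.assoc)
  finally show ?case .
qed

theorem twirl_checks_depolarize:
  assumes A: "A \<in> carrier_mat d d" and d: "d = 2 ^ n"
  shows "twirl d (twirl_check d) (d + n) A = (2 ^ d * mtrace A) \<cdot>\<^sub>m 1\<^sub>m d"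
proof (rule eq_matI)
  fix i j assume "i < dim_row ((2 ^ d * mtrace A) \<cdot>\<^sub>m 1\<^sub>m d)" "j < dim_col ((2 ^ d * mtrace A) \<cdot>\<^sub>m 1\<^sub>m d)"
  then have ij: "i < d" "j < d" by auto
  have "(\<Sum>t<2 ^ n. A $$ ((i + t) mod d, (i + t) mod d)) = (\<Sum>t<d. A $$ (t, t))"
    unfolding d[symmetric] by (rule sum_mod_shift[of d "\<lambda>x. A $$ (x, x)"]) (use d in simp)
  also have "\<dots> = mtrace A" unfolding mtrace_def using A by simp
  finally show "twirl d (twirl_check d) (d + n) A $$ (i, j) = ((2 ^ d * mtrace A) \<cdot>\<^sub>m 1\<^sub>m d) $$ (i, j)"
    unfolding twirl_cyclic_shifts_index[OF A d le_refl ij] using ij by auto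
qed auto

section \<open>The check sandwiching circuit\<close>

lemma hadamard_entry_mult_False:
  "hadamard_entry a False * hadamard_entry b False = 1 / 2"
  "hadamard_entry False a * hadamard_entry False b = 1 / 2"
proof -
  have "complex_of_real (sqrt 2) * complex_of_real (sqrt 2) = 2"
    by (simp flip: of_real_mult)
  then show "hadamard_entry a False * hadamard_entry b False = 1 / 2"
    and "hadamard_entry False a * hadamard_entry False b = 1 / 2"
    unfolding hadamard_entry_def by (simp_all add: field_simps)
qed

lemma fold_pcs_hadamard_carrier:
  assumes "\<And>x y. B x y \<in> carrier_mat d d"
  shows "fold pcs_hadamard ks B x y \<in> carrier_mat d d"
  using assms by (induction ks arbitrary: B) (auto simp: pcs_hadamard_def)

lemma fold_pcs_hadamard_init:
  assumes \<rho>: "\<rho> \<in> carrier_mat d d" and dist: "distinct ks"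
  shows "fold pcs_hadamard ks (pcs_init d \<rho>) = (\<lambda>x y.
     if (\<forall>k. x k \<longrightarrow> k \<in> set ks) \<and> (\<forall>k. y k \<longrightarrow> k \<in> set ks)
     then ((1 / 2) ^ length ks) \<cdot>\<^sub>m \<rho> else 0\<^sub>m d d)"
  using dist
proof (induction ks rule: rev_induct)
  case Nil
  show ?case unfolding pcs_init_def by (intro ext) (auto simp: fun_eq_iff)
next
  case (snoc k ks)
  have k: "k \<notin> set ks" and IH: "fold pcs_hadamard ks (pcs_init d \<rho>) = (\<lambda>x y.
     if (\<forall>k. x k \<longrightarrow> k \<in> set ks) \<and> (\<forall>k. y k \<longrightarrow> k \<in> set ks)
     then ((1 / 2) ^ length ks) \<cdot>\<^sub>m \<rho> else 0\<^sub>m d d)"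
    using snoc by auto
  show ?case
  proof (intro ext)
    fix x y
    define supp where
      "supp \<longleftrightarrow> (\<forall>k'. x k' \<longrightarrow> k' \<in> set (ks @ [k])) \<and> (\<forall>k'. y k' \<longrightarrow> k' \<in> set (ks @ [k]))"
    have supp_False: "((\<forall>k'. (x(k := False)) k' \<longrightarrow> k' \<in> set ks) \<and> (\<forall>k'. (y(k := False)) k' \<longrightarrow> k' \<in> set ks))
        \<longleftrightarrow> supp"
      unfolding supp_def by auto
    have "\<not> ((\<forall>k'. (x(k := True)) k' \<longrightarrow> k' \<in> set ks) \<and> (\<forall>k'. (y(k := b)) k' \<longrightarrow> k' \<in> set ks))"
      "\<not> ((\<forall>k'. (x(k := b)) k' \<longrightarrow> k' \<in> set ks) \<and> (\<forall>k'. (y(k := True)) k' \<longrightarrow> k' \<in> set ks))" for b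
      using k by auto
    then have "fold pcs_hadamard (ks @ [k]) (pcs_init d \<rho>) x y
        = (hadamard_entry (x k) False * hadamard_entry (y k) False) \<cdot>\<^sub>m
            (if supp then ((1 / 2) ^ length ks) \<cdot>\<^sub>m \<rho> else 0\<^sub>m d d) + 0\<^sub>m d d + 0\<^sub>m d d + 0\<^sub>m d d"
      unfolding fold_append o_def fold_simps pcs_hadamard_def IH supp_False[symmetric]
      by (simp only: if_False smult_zero_mat)
    also have "\<dots> = (if supp then ((1 / 2) ^ length (ks @ [k])) \<cdot>\<^sub>m \<rho> else 0\<^sub>m d d)"
      using \<rho> by (auto simp: hadamard_entry_mult_False smult_smult_mat)
    finally show "fold pcs_hadamard (ks @ [k]) (pcs_init d \<rho>) x y =
       (if (\<forall>k'. x k' \<longrightarrow> k' \<in> set (ks @ [k])) \<and> (\<forall>k'. y k' \<longrightarrow> k' \<in> set (ks @ [k]))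
        then ((1 / 2) ^ length (ks @ [k])) \<cdot>\<^sub>m \<rho> else 0\<^sub>m d d)"
      unfolding supp_def .
  qed
qed

lemma index_fold_pcs_hadamard:
  assumes dist: "distinct ks" and B: "\<And>x y. B x y \<in> carrier_mat d d"
    and xy: "\<And>k. k \<in> set ks \<Longrightarrow> \<not> x k \<and> \<not> y k" and ij: "i < d" "j < d"
  shows "fold pcs_hadamard ks B x y $$ (i, j) = (1 / 2) ^ length ks *
     (\<Sum>a\<in>Pow (set ks). \<Sum>b\<in>Pow (set ks). B (\<lambda>k. x k \<or> k \<in> a) (\<lambda>k. y k \<or> k \<in> b) $$ (i, j))"
  using dist xy
proof (induction ks arbitrary: x y rule: rev_induct)
  case Nil
  have "(\<lambda>k. x k \<or> k \<in> {}) = x" "(\<lambda>k. y k \<or> k \<in> {}) = y" by auto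
  then show ?case by simp
next
  case (snoc k ks x y)
  have k: "k \<notin> set ks" and dist: "distinct ks" and xk: "\<not> x k" "\<not> y k" using snoc.prems by auto
  define F where "F = fold pcs_hadamard ks B"
  define G where "G = (\<lambda>a b. B (\<lambda>k. x k \<or> k \<in> a) (\<lambda>k. y k \<or> k \<in> b) $$ (i, j))"
  have IH: "F (x(k := \<alpha>)) (y(k := \<beta>)) $$ (i, j) = (1 / 2) ^ length ks *
     (\<Sum>a\<in>Pow (set ks). \<Sum>b\<in>Pow (set ks).
        B (\<lambda>k'. (x(k := \<alpha>)) k' \<or> k' \<in> a) (\<lambda>k'. (y(k := \<beta>)) k' \<or> k' \<in> b) $$ (i, j))" for \<alpha> \<beta>
    unfolding F_def by (rule snoc.IH[OF dist]) (use snoc.prems k in auto)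
  have upd: "(\<lambda>k'. (x(k := False)) k' \<or> k' \<in> a) = (\<lambda>k'. x k' \<or> k' \<in> a)"
     "(\<lambda>k'. (x(k := True)) k' \<or> k' \<in> a) = (\<lambda>k'. x k' \<or> k' \<in> insert k a)"
     "(\<lambda>k'. (y(k := False)) k' \<or> k' \<in> a) = (\<lambda>k'. y k' \<or> k' \<in> a)"
     "(\<lambda>k'. (y(k := True)) k' \<or> k' \<in> a) = (\<lambda>k'. y k' \<or> k' \<in> insert k a)" for a
    using xk by auto
  have Fc: "F (x(k := \<alpha>)) (y(k := \<beta>)) \<in> carrier_mat d d" for \<alpha> \<beta>
    unfolding F_def by (rule fold_pcs_hadamard_carrier[OF B])
  have "fold pcs_hadamard (ks @ [k]) B x y $$ (i, j)
      = 1 / 2 * (F (x(k := False)) (y(k := False)) $$ (i, j) + F (x(k := False)) (y(k := True)) $$ (i, j)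
      + F (x(k := True)) (y(k := False)) $$ (i, j) + F (x(k := True)) (y(k := True)) $$ (i, j))"
    unfolding F_def[symmetric] fold_append o_def fold_simps pcs_hadamard_def
    using xk ij by (simp add: hadamard_entry_mult_False algebra_simps carrier_matD[OF Fc])
  also have "\<dots> = (1 / 2) ^ length (ks @ [k]) * (\<Sum>a\<in>Pow (set ks). \<Sum>b\<in>Pow (set ks).
      G a b + G a (insert k b) + G (insert k a) b + G (insert k a) (insert k b))"
    unfolding IH upd G_def by (simp add: sum.distrib algebra_simps)
  also have "(\<Sum>a\<in>Pow (set ks). \<Sum>b\<in>Pow (set ks).
      G a b + G a (insert k b) + G (insert k a) b + G (insert k a) (insert k b))
      = (\<Sum>a\<in>Pow (set (ks @ [k])). \<Sum>b\<in>Pow (set (ks @ [k])). G a b)"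
    using k by (simp add: sum_Pow_insert sum.distrib algebra_simps)
  finally show ?case unfolding G_def .
qed

lemma fold_pcs_hadamard_postselect:
  assumes dist: "distinct ks" and B: "\<And>x y. B x y \<in> carrier_mat d d"
  shows "fold pcs_hadamard ks B (\<lambda>_. False) (\<lambda>_. False) = ((1 / 2) ^ length ks) \<cdot>\<^sub>m
     mat_sum d (Pow (set ks)) (\<lambda>a. mat_sum d (Pow (set ks)) (\<lambda>b. B (\<lambda>k. k \<in> a) (\<lambda>k. k \<in> b)))"
proof (rule eq_matI)
  fix i j assume "i < dim_row ((1 / 2) ^ length ks \<cdot>\<^sub>m
     mat_sum d (Pow (set ks)) (\<lambda>a. mat_sum d (Pow (set ks)) (\<lambda>b. B (\<lambda>k. k \<in> a) (\<lambda>k. k \<in> b))))"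
    and "j < dim_col ((1 / 2) ^ length ks \<cdot>\<^sub>m
     mat_sum d (Pow (set ks)) (\<lambda>a. mat_sum d (Pow (set ks)) (\<lambda>b. B (\<lambda>k. k \<in> a) (\<lambda>k. k \<in> b))))"
  then have ij: "i < d" "j < d" by simp_all
  then show "fold pcs_hadamard ks B (\<lambda>_. False) (\<lambda>_. False) $$ (i, j) = ((1 / 2) ^ length ks \<cdot>\<^sub>m
     mat_sum d (Pow (set ks)) (\<lambda>a. mat_sum d (Pow (set ks)) (\<lambda>b. B (\<lambda>k. k \<in> a) (\<lambda>k. k \<in> b)))) $$ (i, j)"
    by (subst index_fold_pcs_hadamard[OF dist]) (use B in auto)
qed (use fold_pcs_hadamard_carrier[of B d, OF B] in auto)

lemma fold_pcs_controlled:
  assumes B: "\<And>x y. B x y \<in> carrier_mat d d" and C: "\<And>k. C k \<in> carrier_mat d d"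
  shows "fold (\<lambda>k. pcs_controlled d k (C k)) (rev ks) B
    = (\<lambda>x y. controlled_prod d C ks x * B x y * dag (controlled_prod d C ks y))"
proof (induction ks)
  case Nil
  show ?case
  proof (intro ext)
    fix x y
    show "fold (\<lambda>k. pcs_controlled d k (C k)) (rev []) B x y
      = controlled_prod d C [] x * B x y * dag (controlled_prod d C [] y)"
      using B[of x y] by simp
  qed
next
  case (Cons k ks)
  show ?case
  proof (intro ext)
    fix x y
    define Px where "Px = controlled_prod d C ks x"
    define Py where "Py = controlled_prod d C ks y"
    define cx where "cx = (if x k then C k else 1\<^sub>m d)"
    define cy where "cy = (if y k then C k else 1\<^sub>m d)"
    have c: "Px \<in> carrier_mat d d" "Py \<in> carrier_mat d d" "cx \<in> carrier_mat d d" "cy \<in> carrier_mat d d"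
      unfolding Px_def Py_def cx_def cy_def using C by (auto intro: controlled_prod_carrier)
    have "fold (\<lambda>k. pcs_controlled d k (C k)) (rev (k # ks)) B x y = cx * (Px * B x y * dag Py) * dag cy"
      unfolding rev.simps fold_append o_def fold_simps Cons.IH pcs_controlled_def
        Px_def[symmetric] Py_def[symmetric] cx_def cy_def by (simp add: if_distrib[of dag])
    also have "\<dots> = (cx * Px) * B x y * dag (cy * Py)"
      using c B by (simp add: dag_mult[of _ d d _ d] assoc_mult_mat[of _ d d _ d _ d] mult_carrier_mat[of _ d d _ d])
    finally show "fold (\<lambda>k. pcs_controlled d k (C k)) (rev (k # ks)) B x y
       = controlled_prod d C (k # ks) x * B x y * dag (controlled_prod d C (k # ks) y)"
      unfolding controlled_prod_Cons Px_def Py_def cx_def cy_def .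
  qed
qed

lemma kraus_apply_Nil [simp]: "kraus_apply d [] M = 0\<^sub>m d d"
  and kraus_apply_Cons [simp]: "kraus_apply d (E # Es) M = E * M * dag E + kraus_apply d Es M"
  unfolding kraus_apply_def by simp_all

lemma kraus_apply_carrier:
  "(\<And>E. E \<in> set Es \<Longrightarrow> E \<in> carrier_mat d d) \<Longrightarrow> M \<in> carrier_mat d d
   \<Longrightarrow> kraus_apply d Es M \<in> carrier_mat d d"
  by (induction Es) auto

lemma kraus_apply_smult:
  assumes Es: "\<And>E. E \<in> set Es \<Longrightarrow> E \<in> carrier_mat d d" and M: "M \<in> carrier_mat d d"
  shows "kraus_apply d Es (c \<cdot>\<^sub>m M) = c \<cdot>\<^sub>m kraus_apply d Es M"
  using Es
proof (induction Es)
  case (Cons E Es)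
  then have E: "E \<in> carrier_mat d d" and rest: "kraus_apply d Es M \<in> carrier_mat d d"
    using kraus_apply_carrier[OF _ M] by auto
  have "E * (c \<cdot>\<^sub>m M) * dag E = c \<cdot>\<^sub>m (E * M * dag E)"
    using E M by (simp add: mult_smult_distrib[of _ d d _ d] mult_smult_assoc_mat[of _ d d _ d])
  moreover have "E * M * dag E \<in> carrier_mat d d" using E M by (meson dag_carrier_matI mult_carrier_mat)
  ultimately show ?case
    using Cons rest by (simp add: add_smult_distrib_left_mat[of _ d d])
qed simp

lemma mat_sum_conj_bilinear:
  assumes Z: "\<And>a. Z a \<in> carrier_mat d d" and R: "R \<in> carrier_mat d d"
  shows "mat_sum d S (\<lambda>a. mat_sum d S (\<lambda>b. Z a * R * dag (Z b))) = mat_sum d S Z * R * dag (mat_sum d S Z)"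
proof -
  have ZR: "\<And>a. Z a * R \<in> carrier_mat d d" by (rule mult_carrier_mat[OF Z R])
  have "mat_sum d S Z * R * dag (mat_sum d S Z) = mat_sum d S (\<lambda>a. Z a * R) * mat_sum d S (\<lambda>b. dag (Z b))"
    using Z R by (simp add: mult_mat_sum_right dag_mat_sum)
  also have "\<dots> = mat_sum d S (\<lambda>a. Z a * R * mat_sum d S (\<lambda>b. dag (Z b)))"
    by (rule mult_mat_sum_right) (use ZR in auto)
  also have "\<dots> = mat_sum d S (\<lambda>a. mat_sum d S (\<lambda>b. Z a * R * dag (Z b)))"
    by (rule mat_sum_cong, rule mult_mat_sum_left) (use ZR Z in auto)
  finally show ?thesis by simp
qed

lemma mat_sum_kraus_apply:
  assumes X: "\<And>a. X a \<in> carrier_mat d d" and Y: "\<And>a. Y a \<in> carrier_mat d d"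
    and R: "R \<in> carrier_mat d d" and Es: "\<And>E. E \<in> set Es \<Longrightarrow> E \<in> carrier_mat d d"
  shows "mat_sum d S (\<lambda>a. mat_sum d S (\<lambda>b. X a * kraus_apply d Es (Y a * R * dag (Y b)) * dag (X b)))
    = kraus_apply d (map (\<lambda>E. mat_sum d S (\<lambda>a. X a * E * Y a)) Es) R"
  using Es
proof (induction Es)
  case Nil
  have "X a * 0\<^sub>m d d * dag (X b) = 0\<^sub>m d d" for a b
    using X[of a] X[of b] by simp
  then show ?case by (intro eq_matI) auto
next
  case (Cons E Es)
  then have E: "E \<in> carrier_mat d d" and Es: "\<And>E. E \<in> set Es \<Longrightarrow> E \<in> carrier_mat d d" by auto
  define M where "M = (\<lambda>a b. Y a * R * dag (Y b))"
  define Z where "Z = (\<lambda>a. X a * E * Y a)"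
  define K where "K = (\<lambda>a b. X a * kraus_apply d Es (M a b) * dag (X b))"
  have Mc: "M a b \<in> carrier_mat d d" for a b unfolding M_def by (meson Y R dag_carrier_matI mult_carrier_mat)
  have Zc: "Z a \<in> carrier_mat d d" for a unfolding Z_def by (meson X E Y mult_carrier_mat)
  have KE: "kraus_apply d Es (M a b) \<in> carrier_mat d d" for a b
    by (rule kraus_apply_carrier[OF _ Mc]) (use Es in auto)
  have Kc: "K a b \<in> carrier_mat d d" for a b
    unfolding K_def by (meson X KE dag_carrier_matI mult_carrier_mat)
  have split: "X a * kraus_apply d (E # Es) (M a b) * dag (X b) = Z a * R * dag (Z b) + K a b" for a b
  proof -
    have EMc: "E * M a b * dag E \<in> carrier_mat d d" by (meson E Mc dag_carrier_matI mult_carrier_mat)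
    have "X a * kraus_apply d (E # Es) (M a b) * dag (X b)
        = (X a * (E * M a b * dag E) + X a * kraus_apply d Es (M a b)) * dag (X b)"
      by (simp add: mult_add_distrib_mat[OF X EMc KE])
    also have "\<dots> = X a * (E * M a b * dag E) * dag (X b) + K a b"
      unfolding K_def by (rule add_mult_distrib_mat[of _ d d _ _ d]) (meson X EMc KE dag_carrier_matI mult_carrier_mat)+
    also have "X a * (E * M a b * dag E) * dag (X b) = Z a * R * dag (Z b)"
      unfolding Z_def M_def using X E Y R
      by (simp add: dag_mult[of _ d d _ d] assoc_mult_mat[of _ d d _ d _ d] mult_carrier_mat[of _ d d _ d])
    finally show ?thesis .
  qed
  have "mat_sum d S (\<lambda>a. mat_sum d S (\<lambda>b. X a * kraus_apply d (E # Es) (M a b) * dag (X b)))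
      = mat_sum d S (\<lambda>a. mat_sum d S (\<lambda>b. Z a * R * dag (Z b))) + mat_sum d S (\<lambda>a. mat_sum d S (K a))"
    unfolding split using Zc R Kc by (simp add: mat_sum_add mult_carrier_mat[of _ d d _ d])
  also have "mat_sum d S (\<lambda>a. mat_sum d S (\<lambda>b. Z a * R * dag (Z b))) = mat_sum d S Z * R * dag (mat_sum d S Z)"
    by (rule mat_sum_conj_bilinear[OF Zc R])
  finally show ?case
    using Cons.IH[OF Es] unfolding M_def Z_def K_def by simp
qed

lemma kraus_apply_scalar_multiples:
  assumes U: "U \<in> carrier_mat d d" and \<rho>: "\<rho> \<in> carrier_mat d d"
  shows "kraus_apply d (map (\<lambda>E. c E \<cdot>\<^sub>m U) Es) \<rho>
    = complex_of_real (\<Sum>E\<leftarrow>Es. (cmod (c E))\<^sup>2) \<cdot>\<^sub>m (U * \<rho> * dag U)"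
proof (induction Es)
  case Nil
  then show ?case using U \<rho> by (intro eq_matI) auto
next
  case (Cons E Es)
  have norm: "cnj (c E) * c E = complex_of_real ((cmod (c E))\<^sup>2)"
    by (metis complex_norm_square mult.commute)
  have "(c E \<cdot>\<^sub>m U) * \<rho> * dag (c E \<cdot>\<^sub>m U) = complex_of_real ((cmod (c E))\<^sup>2) \<cdot>\<^sub>m (U * \<rho> * dag U)"
    using U \<rho>
    by (simp add: dag_smult mult_smult_distrib[of _ d d _ d] mult_smult_assoc_mat[of _ d d _ d]
        smult_smult_mat norm mult_carrier_mat[of _ d d _ d] del: of_real_power)
  moreover have "U * \<rho> * dag U \<in> carrier_mat d d" using U \<rho> by (meson dag_carrier_matI mult_carrier_mat)
  ultimately show ?case
    using Cons by (simp add: add_smult_distrib_right_mat)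
qed

definition pcs_kraus_op :: "nat \<Rightarrow> nat \<Rightarrow> (nat \<Rightarrow> complex mat) \<Rightarrow> (nat \<Rightarrow> complex mat)
    \<Rightarrow> complex mat \<Rightarrow> complex mat \<Rightarrow> complex mat" where
  "pcs_kraus_op d m C1 C2 U E = mat_sum d (Pow {1..m}) (\<lambda>a.
     controlled_prod d C2 (rev [1..<Suc m]) (\<lambda>k. k \<in> a) * E * U * controlled_prod d C1 [1..<Suc m] (\<lambda>k. k \<in> a))"

lemma pcs_kraus_op_carrier [simp]: "pcs_kraus_op d m C1 C2 U E \<in> carrier_mat d d"
  unfolding pcs_kraus_op_def by simp

lemma pcs_sandwich_layers:
  fixes ks :: "nat list"
  assumes C1: "\<And>k. C1 k \<in> carrier_mat d d" and C2: "\<And>k. C2 k \<in> carrier_mat d d"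
    and U: "U \<in> carrier_mat d d" and S: "\<And>x y. S x y \<in> carrier_mat d d"
    and Es: "\<forall>E \<in> set Es. E \<in> carrier_mat d d"
  defines "T \<equiv> fold (\<lambda>k. pcs_controlled d k (C2 k)) ks
      (pcs_noise d Es (pcs_unitary U (fold (\<lambda>k. pcs_controlled d k (C1 k)) (rev ks) S)))"
  shows "T x y = controlled_prod d C2 (rev ks) x
        * kraus_apply d Es ((U * controlled_prod d C1 ks x) * S x y * dag (U * controlled_prod d C1 ks y))
        * dag (controlled_prod d C2 (rev ks) y)"
    and "T x y \<in> carrier_mat d d"
proof -
  define W1 where "W1 = controlled_prod d C1 ks"
  define W2 where "W2 = controlled_prod d C2 (rev ks)"
  have W: "W1 x \<in> carrier_mat d d" "W2 x \<in> carrier_mat d d" for x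
    unfolding W1_def W2_def using C1 C2 by (auto intro: controlled_prod_carrier)
  define K where "K x y = kraus_apply d Es ((U * W1 x) * S x y * dag (U * W1 y))" for x y
  have inner: "pcs_noise d Es (pcs_unitary U (fold (\<lambda>k. pcs_controlled d k (C1 k)) (rev ks) S)) = K"
    unfolding pcs_noise_def pcs_unitary_def fold_pcs_controlled[OF S C1] W1_def[symmetric] K_def
    using U W S
    by (simp add: dag_mult[of _ d d _ d] assoc_mult_mat[of _ d d _ d _ d] mult_carrier_mat[of _ d d _ d])
  have Kc: "K x y \<in> carrier_mat d d" for x y
  proof -
    have "U * W1 x \<in> carrier_mat d d" "U * W1 y \<in> carrier_mat d d" using U W by auto
    then have "U * W1 x * S x y * dag (U * W1 y) \<in> carrier_mat d d"
      using S by (meson dag_carrier_matI mult_carrier_mat)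
    then show ?thesis unfolding K_def by (rule kraus_apply_carrier[rotated]) (use Es in auto)
  qed
  have T: "T = (\<lambda>x y. W2 x * K x y * dag (W2 y))"
    unfolding T_def inner W2_def using fold_pcs_controlled[of K d C2 "rev ks", OF Kc C2] by simp
  show "T x y = controlled_prod d C2 (rev ks) x
        * kraus_apply d Es ((U * controlled_prod d C1 ks x) * S x y * dag (U * controlled_prod d C1 ks y))
        * dag (controlled_prod d C2 (rev ks) y)"
    unfolding T K_def W1_def W2_def ..
  show "T x y \<in> carrier_mat d d"
    unfolding T using W Kc by (meson dag_carrier_matI mult_carrier_mat)
qed

theorem pcs_postselected_unnorm_eq_kraus:
  assumes C1: "\<And>k. C1 k \<in> carrier_mat d d" and C2: "\<And>k. C2 k \<in> carrier_mat d d"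
    and U: "U \<in> carrier_mat d d" and \<rho>: "\<rho> \<in> carrier_mat d d"
    and Es: "\<forall>E \<in> set Es. E \<in> carrier_mat d d"
  shows "pcs_postselected_unnorm d m C1 C2 U Es \<rho>
    = ((1 / 2) ^ m * (1 / 2) ^ m) \<cdot>\<^sub>m kraus_apply d (map (pcs_kraus_op d m C1 C2 U) Es) \<rho>"
proof -
  define ks where "ks = [1..<Suc m]"
  define W1 where "W1 a = U * controlled_prod d C1 ks (\<lambda>k. k \<in> a)" for a
  define W2 where "W2 a = controlled_prod d C2 (rev ks) (\<lambda>k. k \<in> a)" for a
  define R where "R = ((1 / 2) ^ m) \<cdot>\<^sub>m \<rho>"
  define S0 where "S0 = fold pcs_hadamard ks (pcs_init d \<rho>)"
  have ks: "distinct ks" "set ks = {1..m}" "length ks = m" unfolding ks_def by auto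
  have S0: "S0 x y = (if (\<forall>k. x k \<longrightarrow> k \<in> {1..m}) \<and> (\<forall>k. y k \<longrightarrow> k \<in> {1..m}) then R else 0\<^sub>m d d)" for x y
    unfolding S0_def R_def fold_pcs_hadamard_init[OF \<rho> ks(1)] ks(2,3) ..
  have cp: "controlled_prod d C1 ks x \<in> carrier_mat d d" "controlled_prod d C2 (rev ks) x \<in> carrier_mat d d"
    for x using C1 C2 by (auto intro: controlled_prod_carrier)
  have c: "W1 a \<in> carrier_mat d d" "W2 a \<in> carrier_mat d d" "R \<in> carrier_mat d d" "S0 x y \<in> carrier_mat d d"
    for a x y
    unfolding W1_def W2_def R_def S0 using cp U \<rho> by (auto intro: mult_carrier_mat)
  define S where "S = fold (\<lambda>k. pcs_controlled d k (C2 k)) ks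
      (pcs_noise d Es (pcs_unitary U (fold (\<lambda>k. pcs_controlled d k (C1 k)) (rev ks) S0)))"
  note S = pcs_sandwich_layers[of C1 d C2 U S0 Es ks, OF C1 C2 U c(4) Es, folded S_def]
  have "pcs_postselected_unnorm d m C1 C2 U Es \<rho> = fold pcs_hadamard ks S (\<lambda>_. False) (\<lambda>_. False)"
    unfolding pcs_postselected_unnorm_def pcs_circuit_def pcs_hadamard_all_def ks_def S_def S0_def ..
  also have "\<dots> = ((1 / 2) ^ m) \<cdot>\<^sub>m mat_sum d (Pow {1..m}) (\<lambda>a. mat_sum d (Pow {1..m}) (\<lambda>b.
      W2 a * kraus_apply d Es (W1 a * R * dag (W1 b)) * dag (W2 b)))"
    unfolding fold_pcs_hadamard_postselect[of ks S d, OF ks(1) S(2)] ks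
    by (intro arg_cong2[where f = smult_mat] mat_sum_cong) (auto simp: S(1) S0 W1_def W2_def)
  also have "\<dots> = ((1 / 2) ^ m) \<cdot>\<^sub>m kraus_apply d (map (\<lambda>E. mat_sum d (Pow {1..m}) (\<lambda>a. W2 a * E * W1 a)) Es) R"
    by (subst mat_sum_kraus_apply[OF c(2,1,3)]) (use Es in auto)
  also have "map (\<lambda>E. mat_sum d (Pow {1..m}) (\<lambda>a. W2 a * E * W1 a)) Es = map (pcs_kraus_op d m C1 C2 U) Es"
    unfolding pcs_kraus_op_def W1_def W2_def ks_def using Es U C1 C2
    by (intro map_cong mat_sum_cong refl)
      (simp add: assoc_mult_mat[of _ d d _ d _ d] mult_carrier_mat[of _ d d _ d] controlled_prod_carrier)
  finally show ?thesis
    unfolding R_def using \<rho> by (subst (asm) kraus_apply_smult) (auto simp: smult_smult_mat)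
qed

lemma pcs_kraus_op_conj_checks:
  assumes U: "unitary_mat d U" and V: "\<And>k. V k \<in> carrier_mat d d" and E: "E \<in> carrier_mat d d"
  shows "pcs_kraus_op d m V (\<lambda>k. U * dag (V k) * dag U) U E = U * twirl d V m (dag U * E * U)"
proof -
  define W where "W a = controlled_prod d V [1..<Suc m] (\<lambda>k. k \<in> a)" for a
  have Wc: "W a \<in> carrier_mat d d" for a unfolding W_def using V by (intro controlled_prod_carrier)
  have Uc: "U \<in> carrier_mat d d" "dag U \<in> carrier_mat d d" using U unitary_mat_carrier by auto
  have checks_prod: "controlled_prod d (\<lambda>k. U * dag (V k) * dag U) (rev [1..<Suc m]) (\<lambda>k. k \<in> a)
      = U * dag (W a) * dag U" for a
    unfolding W_def dag_controlled_prod[OF V] using V by (intro controlled_prod_conj[OF U]) auto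
  have "pcs_kraus_op d m V (\<lambda>k. U * dag (V k) * dag U) U E
      = mat_sum d (Pow {1..m}) (\<lambda>a. U * (dag (W a) * (dag U * E * U) * W a))"
    unfolding pcs_kraus_op_def checks_prod W_def[symmetric] using Uc Wc E
    by (intro mat_sum_cong) (simp add: assoc_mult_mat[of _ d d _ d _ d] mult_carrier_mat[of _ d d _ d])
  also have "\<dots> = U * twirl d V m (dag U * E * U)"
    unfolding twirl_def W_def[symmetric] using Uc Wc E
    by (subst mult_mat_sum_left) (auto simp: mult_carrier_mat[of _ d d _ d])
  finally show ?thesis .
qed

lemma unitary_check_pair:
  assumes U: "unitary_mat d U" and V: "unitary_mat d V"
  shows "unitary_mat d (U * dag V * dag U)" and "(U * dag V * dag U) * U * V = U"
proof -
  have c: "U \<in> carrier_mat d d" "V \<in> carrier_mat d d" using U V unitary_mat_carrier by auto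
  show "unitary_mat d (U * dag V * dag U)"
    by (intro unitary_mat_mult unitary_mat_dag U V)
  have "(U * dag V * dag U) * U * V = U * (dag V * (dag U * U) * V)"
    using c by (simp add: assoc_mult_mat[of _ d d _ d _ d] mult_carrier_mat[of _ d d _ d])
  then show "(U * dag V * dag U) * U * V = U"
    using U V c unfolding unitary_mat_def by simp
qed

lemma density_mat_unitary_conj:
  assumes \<rho>: "density_mat d \<rho>" and U: "unitary_mat d U"
  shows "density_mat d (U * \<rho> * dag U)"
proof -
  have psd: "psd_mat d \<rho>" and tr: "mtrace \<rho> = 1" using \<rho> unfolding density_mat_def by auto
  have c: "\<rho> \<in> carrier_mat d d" "U \<in> carrier_mat d d" using psd U unitary_mat_carrier psd_mat_def by auto
  have "mtrace (U * \<rho> * dag U) = mtrace (dag U * (U * \<rho>))"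
    by (rule mtrace_mult_comm) (use c in auto)
  also have "dag U * (U * \<rho>) = \<rho>"
    using U c unfolding unitary_mat_def by (simp add: assoc_mult_mat[of _ d d _ d _ d, symmetric])
  finally show ?thesis
    using psd_mat_conj[OF psd c(2)] tr unfolding density_mat_def by simp
qed

lemma pcs_postselected_eq_of_unnorm:
  assumes unnorm: "pcs_postselected_unnorm d m C1 C2 U Es \<rho> = complex_of_real r \<cdot>\<^sub>m X"
    and X: "X \<in> carrier_mat d d" and tr: "mtrace X = 1"
  shows "pcs_success_prob d m C1 C2 U Es \<rho> = r"
    and "r \<noteq> 0 \<Longrightarrow> pcs_postselected d m C1 C2 U Es \<rho> = X"
proof -
  show prob: "pcs_success_prob d m C1 C2 U Es \<rho> = r"
    unfolding pcs_success_prob_def unnorm mtrace_smult[OF X] tr by simp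
  assume "r \<noteq> 0"
  then show "pcs_postselected d m C1 C2 U Es \<rho> = X"
    unfolding pcs_postselected_def prob unnorm smult_smult_mat using X by (intro eq_matI) auto
qed

lemma pcs_postselected_unnorm_twirl_checks:
  assumes d: "d = 2 ^ n" and U: "unitary_mat d U" and \<rho>: "\<rho> \<in> carrier_mat d d"
    and Es: "\<forall>E \<in> set Es. E \<in> carrier_mat d d"
  shows "pcs_postselected_unnorm d (d + n) (twirl_check d) (\<lambda>k. U * dag (twirl_check d k) * dag U) U Es \<rho>
    = complex_of_real ((1 / 2) ^ (d + n) * (1 / 2) ^ (d + n)
        * (\<Sum>E\<leftarrow>Es. (cmod (2 ^ d * mtrace (dag U * E * U)))\<^sup>2)) \<cdot>\<^sub>m (U * \<rho> * dag U)"
proof -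
  define C2 where "C2 = (\<lambda>k. U * dag (twirl_check d k) * dag U)"
  have Uc: "U \<in> carrier_mat d d" using U unitary_mat_carrier by blast
  have C2c: "C2 k \<in> carrier_mat d d" for k
    unfolding C2_def using Uc by (meson dag_carrier_matI mult_carrier_mat twirl_check_carrier)
  have kraus_ops: "pcs_kraus_op d (d + n) (twirl_check d) C2 U E = (2 ^ d * mtrace (dag U * E * U)) \<cdot>\<^sub>m U"
    if E: "E \<in> carrier_mat d d" for E
  proof -
    have A: "dag U * E * U \<in> carrier_mat d d" using E Uc by (meson dag_carrier_matI mult_carrier_mat)
    have "pcs_kraus_op d (d + n) (twirl_check d) C2 U E = U * twirl d (twirl_check d) (d + n) (dag U * E * U)"
      unfolding C2_def by (rule pcs_kraus_op_conj_checks[OF U twirl_check_carrier E])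
    also have "\<dots> = U * ((2 ^ d * mtrace (dag U * E * U)) \<cdot>\<^sub>m 1\<^sub>m d)"
      by (simp only: twirl_checks_depolarize[OF A d])
    finally show ?thesis using Uc by (simp add: mult_smult_distrib[of _ d d _ d])
  qed
  have "pcs_postselected_unnorm d (d + n) (twirl_check d) C2 U Es \<rho>
      = ((1 / 2) ^ (d + n) * (1 / 2) ^ (d + n)) \<cdot>\<^sub>m
        kraus_apply d (map (pcs_kraus_op d (d + n) (twirl_check d) C2 U) Es) \<rho>"
    by (rule pcs_postselected_unnorm_eq_kraus[OF twirl_check_carrier C2c Uc \<rho> Es])
  also have "map (pcs_kraus_op d (d + n) (twirl_check d) C2 U) Es
      = map (\<lambda>E. (2 ^ d * mtrace (dag U * E * U)) \<cdot>\<^sub>m U) Es"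
    using kraus_ops Es by simp
  also have "kraus_apply d \<dots> \<rho>
      = complex_of_real (\<Sum>E\<leftarrow>Es. (cmod (2 ^ d * mtrace (dag U * E * U)))\<^sup>2) \<cdot>\<^sub>m (U * \<rho> * dag U)"
    by (rule kraus_apply_scalar_multiples[OF Uc \<rho>])
  finally show ?thesis unfolding C2_def by (simp add: smult_smult_mat)
qed

theorem theorem1:
  fixes n :: nat and U \<rho> :: "complex mat" and Es :: "complex mat list"
  assumes "n \<ge> 1"
    and "unitary_mat (2 ^ n) U"
    and "density_mat (2 ^ n) \<rho>"
    and "\<forall>E \<in> set Es. E \<in> carrier_mat (2 ^ n) (2 ^ n)"
  shows "\<exists>m C1 C2. m \<ge> 1 \<and>
     (\<forall>k \<in> {1..m}. unitary_mat (2 ^ n) (C1 k) \<and> unitary_mat (2 ^ n) (C2 k) \<and> C2 k * U * C1 k = U) \<and>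
     (pcs_success_prob (2 ^ n) m C1 C2 U Es \<rho> \<noteq> 0 \<longrightarrow>
        fidelity (pcs_postselected (2 ^ n) m C1 C2 U Es \<rho>) (U * \<rho> * dag U) = 1)"
proof -
  define d where "d = (2::nat) ^ n"
  define C2 where "C2 = (\<lambda>k. U * dag (twirl_check d k) * dag U)"
  have U: "unitary_mat d U" and \<rho>: "density_mat d \<rho>" using assms(2,3) unfolding d_def .
  have X: "density_mat d (U * \<rho> * dag U)" by (rule density_mat_unitary_conj[OF \<rho> U])
  then have Xc: "U * \<rho> * dag U \<in> carrier_mat d d" and tr: "mtrace (U * \<rho> * dag U) = 1"
    unfolding density_mat_def psd_mat_def by auto
  have checks: "unitary_mat d (twirl_check d k) \<and> unitary_mat d (C2 k) \<and> C2 k * U * twirl_check d k = U" for k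
    using unitary_check_pair[OF U twirl_check_unitary] twirl_check_unitary unfolding C2_def d_def by auto
  obtain r where "pcs_postselected_unnorm d (d + n) (twirl_check d) C2 U Es \<rho>
      = complex_of_real r \<cdot>\<^sub>m (U * \<rho> * dag U)"
    using pcs_postselected_unnorm_twirl_checks[OF d_def U _ assms(4)[folded d_def]] \<rho>
    unfolding C2_def density_mat_def psd_mat_def by blast
  note postselected = pcs_postselected_eq_of_unnorm[OF this Xc tr]
  have "d + n \<ge> 1
      \<and> (\<forall>k \<in> {1..d + n}. unitary_mat d (twirl_check d k) \<and> unitary_mat d (C2 k) \<and> C2 k * U * twirl_check d k = U)
      \<and> (pcs_success_prob d (d + n) (twirl_check d) C2 U Es \<rho> \<noteq> 0 \<longrightarrow>
        fidelity (pcs_postselected d (d + n) (twirl_check d) C2 U Es \<rho>) (U * \<rho> * dag U) = 1)"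
    using checks fidelity_self[OF X] postselected by (auto simp: d_def Suc_le_eq)
  then show ?thesis unfolding d_def by blast
qed

end
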